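(* For every $Z\subset X$, the subgroup $K_Z$ is normal in $G_Z$.
   Context: $\Gamma$ is a finite simplicial graph with vertex set $X$, $A_\Gamma$ its right-angled Artin group ($x,y\in X$ commute iff adjacent). $L=X\cup X^{-1}$; for $u\in L$, $\bar u\in X$ is the vertex with $u\in\{\bar u,\bar u^{-1}\}$. $\mathrm{lk}(v)$ is the set of neighbours of $v$, $\mathrm{st}(v)=\mathrm{lk}(v)\cup\{v\}$. Domination: $v\ge w$ iff $\mathrm{lk}(w)\subset\mathrm{st}(v)$; for letters, $u\ge u'$ iff $\bar u\ge\bar u'$. For $u,v\in L$ with $u\ge v$, $\bar u\ne\bar v$, the transvection $\tau_{u,v}$ sends $v\mapsto vu$ and fixes all generators other than $\bar v$. For $u\ge v$, $\bar u\ne\bar v$, $c_{u,\{v\}}$ sends $v\mapsto u^{-1}vu$ and fixes all other generators. For $x,y,c\in L$ with $x,y\ge c$ and $\bar x,\bar y,\bar c$ distinct, $\tau_{[x,y],c}$ sends $c\mapsto c[x,y]$ and fixes all generators other than $\bar c$. For $Z\subset X$: $G_Z\le\mathrm{Aut}\,A_\Gamma$ is generated by the transvections $\tau_{a,b}$ with $a,b\in Z\cup Z^{-1}$, $a\ge b$, $\bar a\ne\bar b$, together with all inner automorphisms; $K_Z$ is generated by all $\tau_{[x,y],c}$ and all $c_{x,\{c\}}$ with $x,y,c\in Z$ and $x,y\ge c$ (distinct where required), together with all inner automorphisms. *)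

theory Defs
  imports "HOL-Algebra.Bij" "HOL-Algebra.Generated_Groups"
begin

text \<open>A letter is a pair (v, b) with v a vertex;
b = False means the generator v, b = True means its inverse.\<close>

type_synonym 'v letter = "'v \<times> bool"
type_synonym 'v word = "'v letter list"

definition letters :: "'v set \<Rightarrow> 'v letter set" where
  "letters X = X \<times> UNIV"

definition inv_letter :: "'v letter \<Rightarrow> 'v letter" where
  "inv_letter a = (fst a, \<not> snd a)"

definition inv_word :: "'v word \<Rightarrow> 'v word" where
  "inv_word w = rev (map inv_letter w)"

definition words :: "'v set \<Rightarrow> 'v word set" where
  "words X = lists (letters X)"

inductive raag_step :: "('v \<Rightarrow> 'v \<Rightarrow> bool) \<Rightarrow> 'v word \<Rightarrow> 'v word \<Rightarrow> bool"
  for E where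
  cancel: "raag_step E (u @ [a, inv_letter a] @ w) (u @ w)"
| swap: "E (fst a) (fst b) \<Longrightarrow> raag_step E (u @ [a, b] @ w) (u @ [b, a] @ w)"

definition raag_rel :: "'v set \<Rightarrow> ('v \<Rightarrow> 'v \<Rightarrow> bool) \<Rightarrow> ('v word \<times> 'v word) set" where
  "raag_rel X E = ({(u, w). u \<in> words X \<and> w \<in> words X \<and> (raag_step E u w \<or> raag_step E w u)})\<^sup>*
                   \<inter> (words X \<times> words X)"

definition RAAG :: "'v set \<Rightarrow> ('v \<Rightarrow> 'v \<Rightarrow> bool) \<Rightarrow> 'v word set monoid" where
  "RAAG X E =
    \<lparr>carrier = words X // raag_rel X E,
     mult = (\<lambda>C D. \<Union>u\<in>C. \<Union>w\<in>D. raag_rel X E `` {u @ w}),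
     one = raag_rel X E `` {[]}\<rparr>"

fun subst_word :: "('v \<Rightarrow> 'v word) \<Rightarrow> 'v word \<Rightarrow> 'v word" where
  "subst_word f [] = []"
| "subst_word f (a # w) = (if snd a then inv_word (f (fst a)) else f (fst a)) @ subst_word f w"

definition induced :: "'v set \<Rightarrow> ('v \<Rightarrow> 'v \<Rightarrow> bool) \<Rightarrow> ('v \<Rightarrow> 'v word) \<Rightarrow> 'v word set \<Rightarrow> 'v word set" where
  "induced X E f = (\<lambda>C \<in> carrier (RAAG X E). \<Union>w\<in>C. raag_rel X E `` {subst_word f w})"

definition send_letter :: "'v letter \<Rightarrow> 'v word \<Rightarrow> 'v \<Rightarrow> 'v word" where
  "send_letter v w = (\<lambda>y. if y = fst v then (if snd v then inv_word w else w) else [(y, False)])"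

definition Aut :: "'v set \<Rightarrow> ('v \<Rightarrow> 'v \<Rightarrow> bool) \<Rightarrow> ('v word set \<Rightarrow> 'v word set) monoid" where
  "Aut X E = AutoGroup (RAAG X E)"

definition inner_auts :: "'v set \<Rightarrow> ('v \<Rightarrow> 'v \<Rightarrow> bool) \<Rightarrow> ('v word set \<Rightarrow> 'v word set) set" where
  "inner_auts X E = {(\<lambda>h \<in> carrier (RAAG X E).
       inv\<^bsub>RAAG X E\<^esub> g \<otimes>\<^bsub>RAAG X E\<^esub> h \<otimes>\<^bsub>RAAG X E\<^esub> g) | g. g \<in> carrier (RAAG X E)}"

definition lk :: "'v set \<Rightarrow> ('v \<Rightarrow> 'v \<Rightarrow> bool) \<Rightarrow> 'v \<Rightarrow> 'v set" where
  "lk X E v = {w \<in> X. E v w}"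

definition st :: "'v set \<Rightarrow> ('v \<Rightarrow> 'v \<Rightarrow> bool) \<Rightarrow> 'v \<Rightarrow> 'v set" where
  "st X E v = insert v (lk X E v)"

definition dominates :: "'v set \<Rightarrow> ('v \<Rightarrow> 'v \<Rightarrow> bool) \<Rightarrow> 'v \<Rightarrow> 'v \<Rightarrow> bool" where
  "dominates X E v w \<longleftrightarrow> lk X E w \<subseteq> st X E v"

definition transvection :: "'v set \<Rightarrow> ('v \<Rightarrow> 'v \<Rightarrow> bool) \<Rightarrow> 'v letter \<Rightarrow> 'v letter \<Rightarrow> 'v word set \<Rightarrow> 'v word set" where
  "transvection X E u v = induced X E (send_letter v [v, u])"

definition pconj :: "'v set \<Rightarrow> ('v \<Rightarrow> 'v \<Rightarrow> bool) \<Rightarrow> 'v letter \<Rightarrow> 'v letter \<Rightarrow> 'v word set \<Rightarrow> 'v word set" where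
  "pconj X E u v = induced X E (send_letter v [inv_letter u, v, u])"

definition comm_transvection :: "'v set \<Rightarrow> ('v \<Rightarrow> 'v \<Rightarrow> bool) \<Rightarrow> 'v letter \<Rightarrow> 'v letter \<Rightarrow> 'v letter \<Rightarrow> 'v word set \<Rightarrow> 'v word set" where
  "comm_transvection X E x y c = induced X E (send_letter c [c, inv_letter x, inv_letter y, x, y])"

definition G_gens :: "'v set \<Rightarrow> ('v \<Rightarrow> 'v \<Rightarrow> bool) \<Rightarrow> 'v set \<Rightarrow> ('v word set \<Rightarrow> 'v word set) set" where
  "G_gens X E Z = {transvection X E a b | a b. a \<in> letters Z \<and> b \<in> letters Z \<and>
                      dominates X E (fst a) (fst b) \<and> fst a \<noteq> fst b} \<union> inner_auts X E"

definition K_gens :: "'v set \<Rightarrow> ('v \<Rightarrow> 'v \<Rightarrow> bool) \<Rightarrow> 'v set \<Rightarrow> ('v word set \<Rightarrow> 'v word set) set" where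
  "K_gens X E Z =
     {comm_transvection X E x y c | x y c. x \<in> letters Z \<and> y \<in> letters Z \<and> c \<in> letters Z \<and>
         dominates X E (fst x) (fst c) \<and> dominates X E (fst y) (fst c) \<and>
         fst x \<noteq> fst y \<and> fst x \<noteq> fst c \<and> fst y \<noteq> fst c}
   \<union> {pconj X E x c | x c. x \<in> letters Z \<and> c \<in> letters Z \<and>
         dominates X E (fst x) (fst c) \<and> fst x \<noteq> fst c}
   \<union> inner_auts X E"

definition G_Z :: "'v set \<Rightarrow> ('v \<Rightarrow> 'v \<Rightarrow> bool) \<Rightarrow> 'v set \<Rightarrow> ('v word set \<Rightarrow> 'v word set) set" where
  "G_Z X E Z = generate (Aut X E) (G_gens X E Z)"

definition K_Z :: "'v set \<Rightarrow> ('v \<Rightarrow> 'v \<Rightarrow> bool) \<Rightarrow> 'v set \<Rightarrow> ('v word set \<Rightarrow> 'v word set) set" where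
  "K_Z X E Z = generate (Aut X E) (K_gens X E Z)"

end

theory Submission
  imports Defs
begin

text \<open>Apart from inner automorphisms, every automorphism that occurs is elementary: it sends
  one generator \<open>c\<close> to \<open>p c q\<close> and fixes the others, where \<open>p\<close> and \<open>q\<close> lie in the subgroup
  \<open>A\<^sub>c\<close> generated by the vertices of \<open>Z\<close> that strictly dominate \<open>c\<close>. These maps compose by
  \<open>(p, q) \<cdot> (p', q') = (p' p, q q')\<close>, so the partial conjugations \<open>c \<mapsto> d\<inverse> c d\<close> and the
  commutator transvections \<open>c \<mapsto> c [d\<^sub>1, d\<^sub>2]\<close> generate every elementary automorphism with
  \<open>p q \<in> [A\<^sub>c, A\<^sub>c]\<close>, and all of these lie in \<open>K\<^sub>Z\<close>. Since \<open>K\<^sub>Z \<subseteq> G\<^sub>Z\<close>, it suffices to show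
  that conjugating these basic generators by a transvection \<open>\<tau>: b \<mapsto> b a\<close> stays in \<open>K\<^sub>Z\<close>.
  For \<open>c = b\<close> this holds because \<open>A\<^sub>c / [A\<^sub>c, A\<^sub>c]\<close> is abelian; if \<open>a \<noteq> c \<noteq> b\<close>, the conjugate is
  the elementary automorphism with \<open>\<tau>\<close> applied to \<open>p\<close> and \<open>q\<close>; if \<open>a = c\<close>, the conjugate is an
  explicit product of elementary automorphisms of the first kind.\<close>

section \<open>Commutators and derived subgroups\<close>

context group
begin

lemma mult_inv_left_cancel: "x \<in> carrier G \<Longrightarrow> y \<in> carrier G \<Longrightarrow> x \<otimes> (inv x \<otimes> y) = y"
  by (simp add: m_assoc[symmetric])

lemma inv_mult_left_cancel: "x \<in> carrier G \<Longrightarrow> y \<in> carrier G \<Longrightarrow> inv x \<otimes> (x \<otimes> y) = y"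
  by (simp add: m_assoc[symmetric])

lemmas group_cancel_simps = m_assoc inv_mult_group mult_inv_left_cancel inv_mult_left_cancel

lemma commute_inv_left:
  assumes "x \<in> carrier G" "y \<in> carrier G" "x \<otimes> y = y \<otimes> x"
  shows "inv x \<otimes> y = y \<otimes> inv x"
proof -
  have "inv x \<otimes> y = inv x \<otimes> (y \<otimes> x) \<otimes> inv x" using assms(1,2)
    by (simp add: m_assoc)
  also have "\<dots> = inv x \<otimes> (x \<otimes> y) \<otimes> inv x" using assms(3) by simp
  also have "\<dots> = y \<otimes> inv x" using assms(1,2) by (simp add: group_cancel_simps)
  finally show ?thesis .
qed

lemma commute_inv_right:
  "x \<in> carrier G \<Longrightarrow> y \<in> carrier G \<Longrightarrow> x \<otimes> y = y \<otimes> x \<Longrightarrow> x \<otimes> inv y = inv y \<otimes> x"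
  using commute_inv_left[of y x] by simp

lemma commute_mult:
  assumes "a \<in> carrier G" "b \<in> carrier G" "x \<in> carrier G" "a \<otimes> x = x \<otimes> a" "b \<otimes> x = x \<otimes> b"
  shows "a \<otimes> b \<otimes> x = x \<otimes> (a \<otimes> b)"
  using assms by (metis m_assoc)

end

text \<open>The commutator in the convention \<open>[x, y] = x\<inverse> y\<inverse> x y\<close> of the paper; the library's
  derived subgroup is generated by the elements \<open>h\<^sub>1 h\<^sub>2 h\<^sub>1\<inverse> h\<^sub>2\<inverse>\<close>, which are the same thing
  with inverted arguments.\<close>
definition commutator :: "('a, 'b) monoid_scheme \<Rightarrow> 'a \<Rightarrow> 'a \<Rightarrow> 'a" where
  "commutator G x y = inv\<^bsub>G\<^esub> x \<otimes>\<^bsub>G\<^esub> inv\<^bsub>G\<^esub> y \<otimes>\<^bsub>G\<^esub> x \<otimes>\<^bsub>G\<^esub> y"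

context group
begin

lemma commutator_carrier [simp]: "x \<in> carrier G \<Longrightarrow> y \<in> carrier G \<Longrightarrow> commutator G x y \<in> carrier G"
  by (simp add: commutator_def)

lemma commutator_one_right [simp]: "x \<in> carrier G \<Longrightarrow> commutator G x \<one> = \<one>"
  by (simp add: commutator_def group_cancel_simps)

lemma commutator_self [simp]: "x \<in> carrier G \<Longrightarrow> commutator G x x = \<one>"
  by (simp add: commutator_def group_cancel_simps)

lemma inv_commutator: "x \<in> carrier G \<Longrightarrow> y \<in> carrier G \<Longrightarrow> inv (commutator G x y) = commutator G y x"
  by (simp add: commutator_def group_cancel_simps)

lemma commutator_inv_left:
  "x \<in> carrier G \<Longrightarrow> y \<in> carrier G \<Longrightarrow> commutator G (inv x) y = x \<otimes> inv (commutator G x y) \<otimes> inv x"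
  by (simp add: commutator_def group_cancel_simps)

lemma commutator_inv_right:
  "x \<in> carrier G \<Longrightarrow> y \<in> carrier G \<Longrightarrow> commutator G x (inv y) = y \<otimes> inv (commutator G x y) \<otimes> inv y"
  by (simp add: commutator_def group_cancel_simps)

lemma commutator_mult_left: "x \<in> carrier G \<Longrightarrow> y \<in> carrier G \<Longrightarrow> z \<in> carrier G \<Longrightarrow>
    commutator G (x \<otimes> y) z = inv y \<otimes> commutator G x z \<otimes> y \<otimes> commutator G y z"
  by (simp add: commutator_def group_cancel_simps)

lemma commutator_mult_right: "x \<in> carrier G \<Longrightarrow> y \<in> carrier G \<Longrightarrow> z \<in> carrier G \<Longrightarrow>
    commutator G x (y \<otimes> z) = commutator G x z \<otimes> (inv z \<otimes> commutator G x y \<otimes> z)"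
  by (simp add: commutator_def group_cancel_simps)

lemma derived_eq_generate_commutators:
  assumes "subgroup H G"
  shows "derived G H = generate G {commutator G x y | x y. x \<in> H \<and> y \<in> H}"
proof -
  have "derived_set G H = {commutator G x y | x y. x \<in> H \<and> y \<in> H}"
  proof (intro equalityI subsetI)
    fix h assume "h \<in> derived_set G H"
    then obtain h1 h2 where "h1 \<in> H" "h2 \<in> H" "h = h1 \<otimes> h2 \<otimes> inv h1 \<otimes> inv h2"
      by blast
    moreover from this have "h = commutator G (inv h1) (inv h2)"
      using subgroup.mem_carrier[OF assms] by (simp add: commutator_def)
    ultimately show "h \<in> {commutator G x y | x y. x \<in> H \<and> y \<in> H}"
      using subgroup.m_inv_closed[OF assms] by blast
  next
    fix h assume "h \<in> {commutator G x y | x y. x \<in> H \<and> y \<in> H}"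
    then obtain x y where "x \<in> H" "y \<in> H" "h = commutator G x y" by blast
    moreover have "inv x \<in> H" "inv y \<in> H"
      using \<open>x \<in> H\<close> \<open>y \<in> H\<close> subgroup.m_inv_closed[OF assms] by auto
    ultimately show "h \<in> derived_set G H"
      using subgroup.mem_carrier[OF assms]
        by (intro UN_I[of "inv x"] UN_I[of "inv y"]) (auto simp: commutator_def)
  qed
  then show ?thesis by (simp add: derived_def)
qed

lemma commutator_mem_derived:
  "subgroup H G \<Longrightarrow> x \<in> H \<Longrightarrow> y \<in> H \<Longrightarrow> commutator G x y \<in> derived G H"
  by (auto simp: derived_eq_generate_commutators intro: generate.incl)

lemma conj_mult_mem_derived:
  assumes H: "subgroup H G" and "p \<in> H" "q \<in> H" "x \<in> H" "y \<in> H" and pq: "p \<otimes> q \<in> derived G H"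
  shows "(inv x \<otimes> p \<otimes> x) \<otimes> (y \<otimes> q \<otimes> inv y) \<in> derived G H"
proof -
  have carr: "p \<in> carrier G" "q \<in> carrier G" "x \<in> carrier G" "y \<in> carrier G"
    using assms subgroup.mem_carrier[OF H] by auto
  define r where "r = commutator G p x \<otimes> commutator G (inv y) (inv q)"
  have r: "r \<in> H" "r \<in> derived G H"
    using assms subgroup.m_closed[OF H] subgroup.m_inv_closed[OF H] commutator_mem_derived[OF H]
      subgroup.m_closed[OF derived_is_subgroup[OF subgroup.subset[OF H]]]
    by (auto simp: r_def commutator_def)
  have "(inv x \<otimes> p \<otimes> x) \<otimes> (y \<otimes> q \<otimes> inv y) = commutator G (inv p) (inv r) \<otimes> r \<otimes> (p \<otimes> q)"
    using carr by (simp add: r_def commutator_def group_cancel_simps)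
  then show ?thesis
    using r pq assms subgroup.m_inv_closed[OF H] commutator_mem_derived[OF H]
      subgroup.m_closed[OF derived_is_subgroup[OF subgroup.subset[OF H]]]
    by simp
qed

lemma commutator_gen_generate_mem:
  assumes A: "A \<subseteq> carrier G" and S: "subgroup S G"
    and conj: "\<And>g s. g \<in> generate G A \<Longrightarrow> s \<in> S \<Longrightarrow> g \<otimes> s \<otimes> inv g \<in> S"
    and gens: "\<And>a b. a \<in> A \<Longrightarrow> b \<in> A \<Longrightarrow> commutator G a b \<in> S"
    and a: "a \<in> A" and h: "h \<in> generate G A"
  shows "commutator G a h \<in> S"
  using h
proof (induction rule: generate.induct)
  case one
  show ?case using a A subgroup.one_closed[OF S] by (auto simp: commutator_def)
next
  case (incl b)
  then show ?case using gens[OF a] by simp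
next
  case (inv b)
  have "a \<in> carrier G" "b \<in> carrier G" using a inv.hyps A by auto
  then show ?case
    using conj[OF generate.incl[OF inv.hyps] subgroup.m_inv_closed[OF S gens[OF a inv.hyps]]]
    by (simp add: commutator_inv_right)
next
  case (eng x y)
  have "a \<in> carrier G" "x \<in> carrier G" "y \<in> carrier G"
    using a A eng(1,2) generate_in_carrier[OF A] by auto
  moreover have "inv y \<otimes> commutator G a x \<otimes> inv (inv y) \<in> S"
    using conj[OF generate_m_inv_closed[OF A eng(2)] eng(3)] .
  ultimately show ?case
    using eng(4) subgroup.m_closed[OF S] by (simp add: commutator_mult_right)
qed

lemma derived_generate_subset:
  assumes A: "A \<subseteq> carrier G" and S: "subgroup S G"
    and conj: "\<And>g s. g \<in> generate G A \<Longrightarrow> s \<in> S \<Longrightarrow> g \<otimes> s \<otimes> inv g \<in> S"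
    and gens: "\<And>a b. a \<in> A \<Longrightarrow> b \<in> A \<Longrightarrow> commutator G a b \<in> S"
  shows "derived G (generate G A) \<subseteq> S"
proof -
  have H: "subgroup (generate G A) G" using generate_is_subgroup[OF A] .
  have H_H: "commutator G g h \<in> S" if g: "g \<in> generate G A" and h: "h \<in> generate G A" for g h
    using g
  proof (induction rule: generate.induct)
    case one
    show ?case using generate_in_carrier[OF A h] subgroup.one_closed[OF S]
      by (simp add: commutator_def)
  next
    case (incl a)
    then show ?case using commutator_gen_generate_mem[OF A S conj gens _ h] by simp
  next
    case (inv a)
    have "a \<in> carrier G" "h \<in> carrier G" using inv.hyps A generate_in_carrier[OF A h] by auto
    then show ?case
      using conj[OF generate.incl[OF inv.hyps]
          subgroup.m_inv_closed[OF S commutator_gen_generate_mem[OF A S conj gens inv.hyps h]]]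
      by (simp add: commutator_inv_left)
  next
    case (eng x y)
    have "x \<in> carrier G" "y \<in> carrier G" "h \<in> carrier G"
      using h eng(1,2) generate_in_carrier[OF A] by auto
    moreover have "inv y \<otimes> commutator G x h \<otimes> inv (inv y) \<in> S"
      using conj[OF generate_m_inv_closed[OF A eng(2)] eng(3)] .
    ultimately show ?case
      using eng(4) subgroup.m_closed[OF S] by (simp add: commutator_mult_left)
  qed
  show ?thesis
    unfolding derived_eq_generate_commutators[OF H]
    by (rule generate_subgroup_incl[OF _ S]) (auto intro: H_H)
qed

lemma normal_generate_if_normalized:
  assumes K: "subgroup K G" and S: "S \<subseteq> carrier G" and KS: "K \<subseteq> generate G S"
    and conj: "\<And>f k. f \<in> S \<Longrightarrow> k \<in> K \<Longrightarrow> f \<otimes> k \<otimes> inv f \<in> K"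
    and conj_inv: "\<And>f k. f \<in> S \<Longrightarrow> k \<in> K \<Longrightarrow> inv f \<otimes> k \<otimes> f \<in> K"
  shows "K \<lhd> G\<lparr>carrier := generate G S\<rparr>"
proof -
  define N where "N = {g \<in> carrier G. \<forall>k\<in>K. g \<otimes> k \<otimes> inv g \<in> K \<and> inv g \<otimes> k \<otimes> g \<in> K}"
  have K_carrier: "k \<in> K \<Longrightarrow> k \<in> carrier G" for k using subgroup.mem_carrier[OF K] .
  have "subgroup N G"
  proof (rule subgroupI)
    show "N \<subseteq> carrier G" by (auto simp: N_def)
    show "N \<noteq> {}" using K_carrier by (auto simp: N_def intro!: exI[of _ \<one>])
  next
    fix g assume "g \<in> N"
    then show "inv g \<in> N" by (auto simp: N_def)
  next
    fix g h assume gh: "g \<in> N" "h \<in> N"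
    have "g \<otimes> h \<otimes> k \<otimes> inv (g \<otimes> h) \<in> K" "inv (g \<otimes> h) \<otimes> k \<otimes> (g \<otimes> h) \<in> K" if k: "k \<in> K" for k
    proof -
      have "g \<otimes> h \<otimes> k \<otimes> inv (g \<otimes> h) = g \<otimes> (h \<otimes> k \<otimes> inv h) \<otimes> inv g"
        "inv (g \<otimes> h) \<otimes> k \<otimes> (g \<otimes> h) = inv h \<otimes> (inv g \<otimes> k \<otimes> g) \<otimes> h"
        using gh k K_carrier by (simp_all add: N_def m_assoc inv_mult_group)
      then show "g \<otimes> h \<otimes> k \<otimes> inv (g \<otimes> h) \<in> K" "inv (g \<otimes> h) \<otimes> k \<otimes> (g \<otimes> h) \<in> K"
        using gh k by (simp_all add: N_def)
    qed
    then show "g \<otimes> h \<in> N" using gh by (simp add: N_def)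
  qed
  moreover have "S \<subseteq> N" using S conj conj_inv by (auto simp: N_def)
  ultimately have gen_N: "generate G S \<subseteq> N" by (rule generate_subgroup_incl[rotated])
  have H: "subgroup (generate G S) G" by (rule generate_is_subgroup[OF S])
  interpret H: group "G\<lparr>carrier := generate G S\<rparr>" by (rule subgroup_imp_group[OF H])
  show ?thesis unfolding H.normal_inv_iff
  proof (intro conjI ballI)
    show "subgroup K (G\<lparr>carrier := generate G S\<rparr>)" by (rule subgroup_incl[OF K H KS])
  next
    fix g k assume "g \<in> carrier (G\<lparr>carrier := generate G S\<rparr>)" "k \<in> K"
    then show
      "g \<otimes>\<^bsub>G\<lparr>carrier := generate G S\<rparr>\<^esub> k \<otimes>\<^bsub>G\<lparr>carrier := generate G S\<rparr>\<^esub> inv\<^bsub>G\<lparr>carrier := generate G S\<rparr>\<^esub> g \<in> K"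
      using gen_N m_inv_consistent[OF H] by (auto simp: N_def)
  qed
qed

end

section \<open>Words and the right-angled Artin group\<close>

lemma words_Nil[simp]: "[] \<in> words X" by (simp add: words_def)
lemma words_Cons[simp]: "(a # w \<in> words X) = (fst a \<in> X \<and> w \<in> words X)"
  by (cases a) (auto simp: words_def letters_def)
lemma words_append[simp]: "(u @ w \<in> words X) = (u \<in> words X \<and> w \<in> words X)"
  by (auto simp: words_def)
lemma inv_letter_fst[simp]: "fst (inv_letter a) = fst a" by (simp add: inv_letter_def)
lemma inv_letter_snd[simp]: "snd (inv_letter a) = (\<not> snd a)" by (simp add: inv_letter_def)
lemma inv_letter_inv[simp]: "inv_letter (inv_letter a) = a" by (simp add: inv_letter_def)
lemma inv_word_Nil[simp]: "inv_word [] = []" by (simp add: inv_word_def)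
lemma inv_word_Cons[simp]: "inv_word (a # w) = inv_word w @ [inv_letter a]"
  by (simp add: inv_word_def)
lemma inv_word_append[simp]: "inv_word (u @ w) = inv_word w @ inv_word u"
  by (simp add: inv_word_def)
lemma inv_word_inv[simp]: "inv_word (inv_word w) = w" by (induct w) auto
lemma inv_word_words[simp]: "(inv_word w \<in> words X) = (w \<in> words X)"
  by (induct w) auto

definition raag_moves :: "'v set \<Rightarrow> ('v \<Rightarrow> 'v \<Rightarrow> bool) \<Rightarrow> ('v word \<times> 'v word) set" where
  "raag_moves X E = {(u, w). u \<in> words X \<and> w \<in> words X \<and> (raag_step E u w \<or> raag_step E w u)}"

lemma raag_rel_moves: "raag_rel X E = (raag_moves X E)\<^sup>* \<inter> (words X \<times> words X)"
  by (simp add: raag_rel_def raag_moves_def)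

lemma raag_step_append_right: "raag_step E u w \<Longrightarrow> raag_step E (u @ z) (w @ z)"
proof (induction rule: raag_step.induct)
  case (cancel u a w) thus ?case using raag_step.cancel[of E u a "w @ z"] by simp
next
  case (swap a b u w) thus ?case using raag_step.swap[of E a b u "w @ z"] by simp
qed

lemma raag_step_append_left: "raag_step E u w \<Longrightarrow> raag_step E (z @ u) (z @ w)"
proof (induction rule: raag_step.induct)
  case (cancel u a w) thus ?case using raag_step.cancel[of E "z @ u" a w] by simp
next
  case (swap a b u w) thus ?case using raag_step.swap[of E a b "z @ u" w] by simp
qed

lemma sym_raag_moves: "sym (raag_moves X E)" by (auto simp: raag_moves_def sym_def)

lemma rtrancl_raag_moves_append:
  assumes uw: "(u, w) \<in> (raag_moves X E)\<^sup>*" and z: "z \<in> words X"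
  shows "(u @ z, w @ z) \<in> (raag_moves X E)\<^sup>*" "(z @ u, z @ w) \<in> (raag_moves X E)\<^sup>*"
proof -
  from uw show "(u @ z, w @ z) \<in> (raag_moves X E)\<^sup>*"
  proof (induction rule: rtrancl_induct)
    case (step y y')
    then have "(y @ z, y' @ z) \<in> raag_moves X E"
      using z by (auto simp: raag_moves_def intro: raag_step_append_right)
    then show ?case using step.IH by (meson rtrancl_into_rtrancl)
  qed simp
  from uw show "(z @ u, z @ w) \<in> (raag_moves X E)\<^sup>*"
  proof (induction rule: rtrancl_induct)
    case (step y y')
    then have "(z @ y, z @ y') \<in> raag_moves X E"
      using z by (auto simp: raag_moves_def intro: raag_step_append_left)
    then show ?case using step.IH by (meson rtrancl_into_rtrancl)
  qed simp
qed

lemma equiv_raag_rel: "equiv (words X) (raag_rel X E)"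
  unfolding raag_rel_moves
proof (rule equivI)
  show "refl_on (words X) ((raag_moves X E)\<^sup>* \<inter> words X \<times> words X)"
    by (auto simp: refl_on_def)
  show "sym ((raag_moves X E)\<^sup>* \<inter> words X \<times> words X)"
    using sym_rtrancl[OF sym_raag_moves[of X E]] by (auto simp: sym_def)
  show "trans ((raag_moves X E)\<^sup>* \<inter> words X \<times> words X)"
    by (auto simp: trans_def)
qed auto

lemma raag_rel_words: "(u, w) \<in> raag_rel X E \<Longrightarrow> u \<in> words X \<and> w \<in> words X"
  by (simp add: raag_rel_moves)

lemma raag_rel_append: assumes "(u, w) \<in> raag_rel X E" "z \<in> words X"
  shows "(u @ z, w @ z) \<in> raag_rel X E" "(z @ u, z @ w) \<in> raag_rel X E"
  using assms rtrancl_raag_moves_append[of u w X E z] by (auto simp: raag_rel_moves)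

lemma raag_rel_trans: "(u, v) \<in> raag_rel X E \<Longrightarrow> (v, w) \<in> raag_rel X E \<Longrightarrow> (u, w) \<in> raag_rel X E"
  using equiv_raag_rel[of X E] by (meson equivE transE)

lemma raag_rel_sym: "(u, v) \<in> raag_rel X E \<Longrightarrow> (v, u) \<in> raag_rel X E"
  using equiv_raag_rel[of X E] by (meson equivE symE)

lemma raag_rel_refl: "u \<in> words X \<Longrightarrow> (u, u) \<in> raag_rel X E"
  by (simp add: raag_rel_moves)

lemma raag_rel_step: "u \<in> words X \<Longrightarrow> w \<in> words X \<Longrightarrow> raag_step E u w \<Longrightarrow> (u, w) \<in> raag_rel X E"
  by (auto simp: raag_rel_moves raag_moves_def)

lemma raag_rel_cancel_right: "w \<in> words X \<Longrightarrow> (w @ inv_word w, []) \<in> raag_rel X E"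
proof (induction w)
  case Nil
  then show ?case by (simp add: raag_rel_refl)
next
  case (Cons a w)
  have "(a # w @ inv_word w @ [inv_letter a], [a, inv_letter a]) \<in> raag_rel X E"
    using raag_rel_append(1)[OF raag_rel_append(2)[OF Cons.IH, of "[a]"], of "[inv_letter a]"]
      Cons.prems
    by simp
  moreover have "([a, inv_letter a], []) \<in> raag_rel X E"
    using raag_rel_step[of "[] @ [a, inv_letter a] @ []" X "[] @ []" E] Cons.prems
      raag_step.cancel[of E "[]" a "[]"] by simp
  ultimately show ?case using raag_rel_trans by simp
qed

lemma raag_rel_cancel_left: "w \<in> words X \<Longrightarrow> (inv_word w @ w, []) \<in> raag_rel X E"
  using raag_rel_cancel_right[of "inv_word w" X E] by simp

locale raag =
  fixes X :: "'v set" and E :: "'v \<Rightarrow> 'v \<Rightarrow> bool" and Z :: "'v set"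
  assumes E_X: "E x y \<Longrightarrow> x \<in> X \<and> y \<in> X"
    and E_sym: "E x y \<Longrightarrow> E y x"
    and Z_X: "Z \<subseteq> X"
begin

abbreviation "R \<equiv> raag_rel X E"
abbreviation "G \<equiv> RAAG X E"
abbreviation "AutG \<equiv> Aut X E"

definition word_class :: "'v word \<Rightarrow> 'v word set" where "word_class w = R `` {w}"

lemma carrier_RAAG: "carrier G = words X // R" by (simp add: RAAG_def)

lemma word_class_carrier[simp]: "w \<in> words X \<Longrightarrow> word_class w \<in> carrier G"
  by (simp add: carrier_RAAG word_class_def quotientI)

lemma carrier_word_class: "C \<in> carrier G \<Longrightarrow> \<exists>w\<in>words X. C = word_class w"
  by (auto simp: carrier_RAAG word_class_def quotient_def)

lemma word_class_eq_iff:
  "u \<in> words X \<Longrightarrow> w \<in> words X \<Longrightarrow> (word_class u = word_class w) = ((u, w) \<in> R)"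
  unfolding word_class_def by (rule eq_equiv_class_iff[OF equiv_raag_rel])

lemma mem_word_class: "(w' \<in> word_class w) = ((w, w') \<in> R)" by (simp add: word_class_def)

lemma word_class_append: assumes "u \<in> words X" "w \<in> words X"
  shows "word_class u \<otimes>\<^bsub>G\<^esub> word_class w = word_class (u @ w)"
proof -
  have "\<And>u' w'. u' \<in> word_class u \<Longrightarrow> w' \<in> word_class w \<Longrightarrow> R `` {u' @ w'} = word_class (u @ w)"
  proof -
    fix u' w' assume a: "u' \<in> word_class u" "w' \<in> word_class w"
    hence r: "(u, u') \<in> R" "(w, w') \<in> R" by (auto simp: mem_word_class)
    have "(u @ w, u' @ w) \<in> R" using raag_rel_append(1)[OF r(1)] assms by simp
    moreover have "(u' @ w, u' @ w') \<in> R" using raag_rel_append(2)[OF r(2)] r raag_rel_words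
      by blast
    ultimately have "(u @ w, u' @ w') \<in> R" by (rule raag_rel_trans)
    thus "R `` {u' @ w'} = word_class (u @ w)" unfolding word_class_def
      by (metis equiv_class_eq[OF equiv_raag_rel] raag_rel_sym)
  qed
  moreover have "u \<in> word_class u" "w \<in> word_class w" using assms
    by (auto simp: mem_word_class raag_rel_refl)
  ultimately show ?thesis by (auto simp: RAAG_def)
qed

lemma one_RAAG: "\<one>\<^bsub>G\<^esub> = word_class []" by (simp add: RAAG_def word_class_def)

lemma group_RAAG: "group G"
proof (rule groupI)
  fix x y assume "x \<in> carrier G" "y \<in> carrier G"
  then obtain u w where "u \<in> words X" "w \<in> words X" "x = word_class u" "y = word_class w"
    using carrier_word_class by blast
  thus "x \<otimes>\<^bsub>G\<^esub> y \<in> carrier G" by (simp add: word_class_append)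
next
  show "\<one>\<^bsub>G\<^esub> \<in> carrier G" by (simp add: one_RAAG)
next
  fix x y z assume "x \<in> carrier G" "y \<in> carrier G" "z \<in> carrier G"
  then obtain u v w where "u \<in> words X" "v \<in> words X" "w \<in> words X" "x = word_class u" "y = word_class v" "z = word_class w"
    using carrier_word_class by metis
  thus "x \<otimes>\<^bsub>G\<^esub> y \<otimes>\<^bsub>G\<^esub> z = x \<otimes>\<^bsub>G\<^esub> (y \<otimes>\<^bsub>G\<^esub> z)"
    by (simp add: word_class_append)
next
  fix x assume "x \<in> carrier G"
  then obtain u where "u \<in> words X" "x = word_class u" using carrier_word_class by blast
  thus "\<one>\<^bsub>G\<^esub> \<otimes>\<^bsub>G\<^esub> x = x" by (simp add: word_class_append one_RAAG)
next
  fix x assume "x \<in> carrier G"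
  then obtain u where u: "u \<in> words X" "x = word_class u" using carrier_word_class by blast
  have "word_class (inv_word u) \<otimes>\<^bsub>G\<^esub> x = \<one>\<^bsub>G\<^esub>"
    using u by (simp add: word_class_append one_RAAG word_class_eq_iff raag_rel_cancel_left)
  thus "\<exists>y\<in>carrier G. y \<otimes>\<^bsub>G\<^esub> x = \<one>\<^bsub>G\<^esub>" using u
    by (metis word_class_carrier inv_word_words)
qed

end

sublocale raag \<subseteq> RAAG: group "RAAG X E" by (rule group_RAAG)

sublocale raag \<subseteq> AutG: group "Aut X E" unfolding Aut_def by (rule RAAG.AutoGroup)

context raag begin

lemma word_class_inv_word: "w \<in> words X \<Longrightarrow> word_class (inv_word w) = inv\<^bsub>G\<^esub> (word_class w)"
  by (rule RAAG.inv_equality[symmetric])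
    (simp_all add: word_class_append one_RAAG word_class_eq_iff raag_rel_cancel_left)

definition gen :: "'v \<Rightarrow> 'v word set" where "gen v = word_class [(v, False)]"

definition letter_elt :: "'v letter \<Rightarrow> 'v word set" where
  "letter_elt a = (if snd a then inv\<^bsub>G\<^esub> (gen (fst a)) else gen (fst a))"

lemma gen_carrier[simp]: "v \<in> X \<Longrightarrow> gen v \<in> carrier G" by (simp add: gen_def)
lemma letter_elt_carrier[simp]: "fst a \<in> X \<Longrightarrow> letter_elt a \<in> carrier G"
  by (simp add: letter_elt_def)

lemma word_class_single: "fst a \<in> X \<Longrightarrow> word_class [a] = letter_elt a"
proof (cases a)
  case (Pair v b)
  assume "fst a \<in> X"
  show ?thesis
  proof (cases b)
    case True
    have "word_class [(v, True)] = word_class (inv_word [(v, False)])"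
      by (simp add: inv_letter_def)
    also have "\<dots> = inv\<^bsub>G\<^esub> (word_class [(v, False)])"
      using Pair \<open>fst a \<in> X\<close>
      by (intro word_class_inv_word) simp
    finally show ?thesis using Pair True by (simp add: letter_elt_def gen_def)
  qed (simp add: Pair letter_elt_def gen_def)
qed

lemma word_class_Nil: "word_class [] = \<one>\<^bsub>G\<^esub>" by (simp add: one_RAAG)

lemma letter_elt_pos[simp]: "letter_elt (v, False) = gen v" by (simp add: letter_elt_def)
lemma letter_elt_neg[simp]: "letter_elt (v, True) = inv\<^bsub>G\<^esub> gen v" by (simp add: letter_elt_def)

lemma word_class_Cons:
  "fst a \<in> X \<Longrightarrow> w \<in> words X \<Longrightarrow> word_class (a # w) = letter_elt a \<otimes>\<^bsub>G\<^esub> word_class w"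
  using word_class_append[of "[a]" w] by (simp add: word_class_single)

lemma letter_elt_inv_letter: "fst a \<in> X \<Longrightarrow> letter_elt (inv_letter a) = inv\<^bsub>G\<^esub> (letter_elt a)"
  by (simp add: letter_elt_def)

lemma gen_commute: "E v w \<Longrightarrow> gen v \<otimes>\<^bsub>G\<^esub> gen w = gen w \<otimes>\<^bsub>G\<^esub> gen v"
proof -
  assume e: "E v w"
  hence "v \<in> X" "w \<in> X" using E_X by auto
  moreover have "raag_step E ([] @ [(v,False), (w,False)] @ []) ([] @ [(w,False), (v,False)] @ [])"
    by (rule raag_step.swap) (simp add: e)
  ultimately show ?thesis unfolding gen_def
    by (simp add: word_class_append word_class_eq_iff raag_rel_step)
qed

section \<open>Endomorphisms given on the generators\<close>

definition letter_image :: "('v \<Rightarrow> 'v word set) \<Rightarrow> 'v letter \<Rightarrow> 'v word set" where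
  "letter_image \<phi> a = (if snd a then inv\<^bsub>G\<^esub> (\<phi> (fst a)) else \<phi> (fst a))"

primrec eval_word :: "('v \<Rightarrow> 'v word set) \<Rightarrow> 'v word \<Rightarrow> 'v word set" where
  "eval_word \<phi> [] = \<one>\<^bsub>G\<^esub>"
| "eval_word \<phi> (a # w) = letter_image \<phi> a \<otimes>\<^bsub>G\<^esub> eval_word \<phi> w"

definition respects_relations :: "('v \<Rightarrow> 'v word set) \<Rightarrow> bool" where
  "respects_relations \<phi> \<longleftrightarrow> (\<forall>v\<in>X. \<phi> v \<in> carrier G) \<and> (\<forall>v w. E v w \<longrightarrow> \<phi> v \<otimes>\<^bsub>G\<^esub> \<phi> w = \<phi> w \<otimes>\<^bsub>G\<^esub> \<phi> v)"

lemma respects_relations_cong: "respects_relations \<phi> \<Longrightarrow> \<forall>v\<in>X. \<phi> v = \<psi> v \<Longrightarrow> respects_relations \<psi>"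
  unfolding respects_relations_def using E_X by (metis (no_types, lifting))

lemma respects_relations_carrier: "respects_relations \<phi> \<Longrightarrow> v \<in> X \<Longrightarrow> \<phi> v \<in> carrier G"
  by (simp add: respects_relations_def)

lemma letter_image_carrier[simp]:
  "\<forall>v\<in>X. \<phi> v \<in> carrier G \<Longrightarrow> fst a \<in> X \<Longrightarrow> letter_image \<phi> a \<in> carrier G"
  by (simp add: letter_image_def)

lemma eval_word_carrier[simp]: "\<forall>v\<in>X. \<phi> v \<in> carrier G \<Longrightarrow> w \<in> words X \<Longrightarrow> eval_word \<phi> w \<in> carrier G"
  by (induct w) auto

lemma eval_word_append: "\<forall>v\<in>X. \<phi> v \<in> carrier G \<Longrightarrow> u \<in> words X \<Longrightarrow> w \<in> words X \<Longrightarrow>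
   eval_word \<phi> (u @ w) = eval_word \<phi> u \<otimes>\<^bsub>G\<^esub> eval_word \<phi> w"
  by (induct u) (auto simp: RAAG.m_assoc)

lemma eval_word_cong: "\<forall>v\<in>X. \<phi> v = \<psi> v \<Longrightarrow> w \<in> words X \<Longrightarrow> eval_word \<phi> w = eval_word \<psi> w"
  by (induct w) (auto simp: letter_image_def)

lemma letter_image_inv_letter:
  "\<forall>v\<in>X. \<phi> v \<in> carrier G \<Longrightarrow> fst a \<in> X \<Longrightarrow> letter_image \<phi> (inv_letter a) = inv\<^bsub>G\<^esub> (letter_image \<phi> a)"
  by (simp add: letter_image_def)

lemma letter_image_commute: assumes "respects_relations \<phi>" "E (fst a) (fst b)"
  shows "letter_image \<phi> a \<otimes>\<^bsub>G\<^esub> letter_image \<phi> b = letter_image \<phi> b \<otimes>\<^bsub>G\<^esub> letter_image \<phi> a"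
proof -
  have X: "fst a \<in> X" "fst b \<in> X" using assms E_X by auto
  have c: "\<phi> (fst a) \<otimes>\<^bsub>G\<^esub> \<phi> (fst b) = \<phi> (fst b) \<otimes>\<^bsub>G\<^esub> \<phi> (fst a)"
    using assms unfolding respects_relations_def by blast
  have car: "\<phi> (fst a) \<in> carrier G" "\<phi> (fst b) \<in> carrier G" using assms X
    by (auto simp: respects_relations_def)
  have c1: "inv\<^bsub>G\<^esub> \<phi> (fst a) \<otimes>\<^bsub>G\<^esub> \<phi> (fst b) = \<phi> (fst b) \<otimes>\<^bsub>G\<^esub> inv\<^bsub>G\<^esub> \<phi> (fst a)"
    using RAAG.commute_inv_left[OF car c] .
  have c2: "\<phi> (fst a) \<otimes>\<^bsub>G\<^esub> inv\<^bsub>G\<^esub> \<phi> (fst b) = inv\<^bsub>G\<^esub> \<phi> (fst b) \<otimes>\<^bsub>G\<^esub> \<phi> (fst a)"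
    using RAAG.commute_inv_right[OF car c] .
  have c3: "inv\<^bsub>G\<^esub> \<phi> (fst a) \<otimes>\<^bsub>G\<^esub> inv\<^bsub>G\<^esub> \<phi> (fst b)
      = inv\<^bsub>G\<^esub> \<phi> (fst b) \<otimes>\<^bsub>G\<^esub> inv\<^bsub>G\<^esub> \<phi> (fst a)"
    using RAAG.commute_inv_right[OF RAAG.inv_closed[OF car(1)] car(2) c1] .
  show ?thesis unfolding letter_image_def using c c1 c2 c3
    by (cases "snd a"; cases "snd b") simp_all
qed

lemma eval_word_raag_step:
  assumes "respects_relations \<phi>" "raag_step E u w" "u \<in> words X" "w \<in> words X"
  shows "eval_word \<phi> u = eval_word \<phi> w"
  using assms(2,3,4)
proof (induction rule: raag_step.induct)
  case (cancel u a w)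
  have c: "\<forall>v\<in>X. \<phi> v \<in> carrier G" using assms(1) respects_relations_def by auto
  have "fst a \<in> X" "u \<in> words X" "w \<in> words X" using cancel by auto
  thus ?case using c
    by (simp add: eval_word_append letter_image_inv_letter RAAG.mult_inv_left_cancel)
next
  case (swap a b u w)
  have c: "\<forall>v\<in>X. \<phi> v \<in> carrier G" using assms(1) respects_relations_def by auto
  have x: "fst a \<in> X" "fst b \<in> X" "u \<in> words X" "w \<in> words X" using swap by auto
  have "letter_image \<phi> a \<otimes>\<^bsub>G\<^esub> (letter_image \<phi> b \<otimes>\<^bsub>G\<^esub> eval_word \<phi> w)
      = letter_image \<phi> b \<otimes>\<^bsub>G\<^esub> (letter_image \<phi> a \<otimes>\<^bsub>G\<^esub> eval_word \<phi> w)"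
    using letter_image_commute[OF assms(1) swap(1)] x c by (simp add: RAAG.m_assoc[symmetric])
  thus ?case using x c by (simp add: eval_word_append)
qed

lemma eval_word_raag_rel:
  assumes "respects_relations \<phi>" "(u, w) \<in> R"
  shows "eval_word \<phi> u = eval_word \<phi> w"
proof -
  have "(u, w) \<in> (raag_moves X E)\<^sup>*" using assms(2) by (simp add: raag_rel_moves)
  thus ?thesis
  proof (induction rule: rtrancl_induct)
    case (step y z)
    have "y \<in> words X" "z \<in> words X" "raag_step E y z \<or> raag_step E z y" using step(2)
      by (auto simp: raag_moves_def)
    hence "eval_word \<phi> y = eval_word \<phi> z" using eval_word_raag_step[OF assms(1)] by metis
    thus ?case using step(3) by simp
  qed simp
qed

lemma word_class_eval_word: "w \<in> words X \<Longrightarrow> word_class w = eval_word gen w"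
  by (induct w) (auto simp: one_RAAG word_class_Cons letter_image_def letter_elt_def)

lemma hom_eval_word: assumes "h \<in> hom G G" "\<forall>v\<in>X. \<phi> v \<in> carrier G" "w \<in> words X"
  shows "h (eval_word \<phi> w) = eval_word (\<lambda>v. h (\<phi> v)) w"
proof -
  interpret gh: group_hom G G h using assms(1)
    by (simp add: group_hom_def group_hom_axioms_def RAAG.group_axioms)
  show ?thesis using assms(3) assms(2) by (induct w) (auto simp: letter_image_def)
qed

lemma subst_word_eval_word: assumes "\<forall>v\<in>X. f v \<in> words X" "w \<in> words X"
  shows "subst_word f w \<in> words X \<and> word_class (subst_word f w) = eval_word (\<lambda>v. word_class (f v)) w"
  using assms(2)
proof (induction w)
  case Nil thus ?case by (simp add: one_RAAG)
next
  case (Cons a w)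
  have fa: "f (fst a) \<in> words X" using assms(1) Cons.prems by simp
  thus ?case using Cons
    by (auto simp: word_class_append[symmetric] word_class_inv_word letter_image_def)
qed

lemma induced_word_class:
  assumes "\<forall>v\<in>X. f v \<in> words X" "respects_relations (\<lambda>v. word_class (f v))" "w \<in> words X"
  shows "induced X E f (word_class w) = eval_word (\<lambda>v. word_class (f v)) w"
proof -
  have "\<And>w'. w' \<in> word_class w \<Longrightarrow> R `` {subst_word f w'} = eval_word (\<lambda>v. word_class (f v)) w"
  proof -
    fix w' assume "w' \<in> word_class w"
    hence r: "(w, w') \<in> R" by (simp add: mem_word_class)
    hence "w' \<in> words X" using raag_rel_words by blast
    hence "R `` {subst_word f w'} = eval_word (\<lambda>v. word_class (f v)) w'"
      using subst_word_eval_word[OF assms(1)] word_class_def by auto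
    also have "\<dots> = eval_word (\<lambda>v. word_class (f v)) w" using eval_word_raag_rel[OF assms(2) r]
      by simp
    finally show "R `` {subst_word f w'} = eval_word (\<lambda>v. word_class (f v)) w" .
  qed
  moreover have "w \<in> word_class w" using assms(3) by (simp add: mem_word_class raag_rel_refl)
  ultimately show ?thesis using assms(3) unfolding induced_def by auto
qed

definition rep_word :: "('v \<Rightarrow> 'v word set) \<Rightarrow> 'v \<Rightarrow> 'v word" where
  "rep_word \<phi> v = (SOME w. w \<in> words X \<and> word_class w = \<phi> v)"

definition extend_hom :: "('v \<Rightarrow> 'v word set) \<Rightarrow> 'v word set \<Rightarrow> 'v word set" where
  "extend_hom \<phi> = induced X E (rep_word \<phi>)"

lemma rep_word_spec: "\<phi> v \<in> carrier G \<Longrightarrow> rep_word \<phi> v \<in> words X \<and> word_class (rep_word \<phi> v) = \<phi> v"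
  unfolding rep_word_def by (rule someI_ex) (metis carrier_word_class)

lemma respects_relations_rep_word:
  assumes "respects_relations \<phi>"
  shows "respects_relations (\<lambda>v. word_class (rep_word \<phi> v))"
  using respects_relations_cong[OF assms] rep_word_spec respects_relations_carrier[OF assms]
  by (metis (no_types, lifting))

lemma extend_hom_word_class:
  assumes "respects_relations \<phi>" "w \<in> words X"
  shows "extend_hom \<phi> (word_class w) = eval_word \<phi> w"
proof -
  have "\<forall>v\<in>X. rep_word \<phi> v \<in> words X"
    using rep_word_spec respects_relations_carrier[OF assms(1)] by blast
  hence "extend_hom \<phi> (word_class w) = eval_word (\<lambda>v. word_class (rep_word \<phi> v)) w"
    unfolding extend_hom_def
      by (rule induced_word_class[OF _ respects_relations_rep_word[OF assms(1)] assms(2)])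
  also have "\<dots> = eval_word \<phi> w"
    by (rule eval_word_cong[OF _ assms(2)])
      (simp add: rep_word_spec respects_relations_carrier[OF assms(1)])
  finally show ?thesis .
qed

lemma extend_hom_extensional: "extend_hom \<phi> \<in> extensional (carrier G)"
  by (simp add: extend_hom_def induced_def)

lemma extend_hom_carrier:
  assumes "respects_relations \<phi>" "x \<in> carrier G"
  shows "extend_hom \<phi> x \<in> carrier G"
  using assms carrier_word_class[OF assms(2)] extend_hom_word_class eval_word_carrier
    respects_relations_def
    by force

lemma extend_hom_hom: assumes "respects_relations \<phi>" shows "extend_hom \<phi> \<in> hom G G"
proof (rule homI)
  fix x assume "x \<in> carrier G" thus "extend_hom \<phi> x \<in> carrier G" using extend_hom_carrier assms
    by blast
next
  fix x y assume "x \<in> carrier G" "y \<in> carrier G"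
  then obtain u w where "u \<in> words X" "w \<in> words X" "x = word_class u" "y = word_class w"
    using carrier_word_class by metis
  thus "extend_hom \<phi> (x \<otimes>\<^bsub>G\<^esub> y) = extend_hom \<phi> x \<otimes>\<^bsub>G\<^esub> extend_hom \<phi> y"
    using assms respects_relations_carrier[OF assms]
      by (simp add: word_class_append extend_hom_word_class eval_word_append)
qed

lemma extend_hom_gen: "respects_relations \<phi> \<Longrightarrow> v \<in> X \<Longrightarrow> extend_hom \<phi> (gen v) = \<phi> v"
  by (simp add: gen_def extend_hom_word_class letter_image_def respects_relations_carrier)

lemma hom_eq_on_gens:
  assumes "h1 \<in> hom G G" "h2 \<in> hom G G" "\<forall>v\<in>X. h1 (gen v) = h2 (gen v)" "x \<in> carrier G"
  shows "h1 x = h2 x"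
proof -
  obtain w where w: "w \<in> words X" "x = word_class w" using carrier_word_class assms(4) by blast
  have "h1 x = eval_word (\<lambda>v. h1 (gen v)) w" using hom_eval_word[OF assms(1)] w
    by (simp add: word_class_eval_word)
  also have "\<dots> = eval_word (\<lambda>v. h2 (gen v)) w" using assms(3) w by (intro eval_word_cong) auto
  also have "\<dots> = h2 x" using hom_eval_word[OF assms(2)] w by (simp add: word_class_eval_word)
  finally show ?thesis .
qed

lemma induced_eq_extend_hom:
  assumes "\<forall>v\<in>X. f v \<in> words X" "respects_relations (\<lambda>v. word_class (f v))"
  shows "induced X E f = extend_hom (\<lambda>v. word_class (f v))"
proof (rule extensionalityI[of _ "carrier G"])
  show "induced X E f \<in> extensional (carrier G)" by (simp add: induced_def)
  show "extend_hom (\<lambda>v. word_class (f v)) \<in> extensional (carrier G)"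
    by (rule extend_hom_extensional)
  fix x assume "x \<in> carrier G"
  then obtain w where "w \<in> words X" "x = word_class w" using carrier_word_class by blast
  thus "induced X E f x = extend_hom (\<lambda>v. word_class (f v)) x"
    using induced_word_class extend_hom_word_class assms by simp
qed

lemma carrier_AutG: "carrier AutG = auto G" by (simp add: Aut_def AutoGroup_def BijGroup_def)

lemma AutG_hom: "f \<in> carrier AutG \<Longrightarrow> f \<in> hom G G" by (simp add: carrier_AutG auto_def)
lemma AutG_Bij: "f \<in> carrier AutG \<Longrightarrow> f \<in> Bij (carrier G)"
  by (simp add: carrier_AutG auto_def)

lemma AutG_apply_carrier: "f \<in> carrier AutG \<Longrightarrow> x \<in> carrier G \<Longrightarrow> f x \<in> carrier G"
  by (rule hom_in_carrier[OF AutG_hom])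

lemma mult_AutG:
  assumes "f \<in> carrier AutG" "g \<in> carrier AutG"
  shows "f \<otimes>\<^bsub>AutG\<^esub> g = compose (carrier G) f g"
proof -
  have "f \<in> Bij (carrier G)" "g \<in> Bij (carrier G)" using AutG_Bij assms by auto
  thus ?thesis unfolding Aut_def AutoGroup_def BijGroup_def by simp
qed

lemma mult_AutG_apply:
  "f \<in> carrier AutG \<Longrightarrow> g \<in> carrier AutG \<Longrightarrow> x \<in> carrier G \<Longrightarrow> (f \<otimes>\<^bsub>AutG\<^esub> g) x = f (g x)"
  by (simp add: mult_AutG compose_def)

lemma one_AutG: "\<one>\<^bsub>AutG\<^esub> = (\<lambda>x\<in>carrier G. x)"
  by (simp add: Aut_def AutoGroup_def BijGroup_def)

lemma AutG_eq_on_gens: assumes "f \<in> carrier AutG" "g \<in> carrier AutG" "\<forall>v\<in>X. f (gen v) = g (gen v)"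
  shows "f = g"
proof (rule extensionalityI[of _ "carrier G"])
  show "f \<in> extensional (carrier G)" "g \<in> extensional (carrier G)"
    using assms AutG_Bij Bij_imp_extensional by blast+
  fix x assume "x \<in> carrier G" thus "f x = g x" using hom_eq_on_gens AutG_hom assms by blast
qed

lemma id_hom_RAAG: "(\<lambda>x\<in>carrier G. x) \<in> hom G G" by (simp add: hom_def)

lemma extend_hom_left_inverse:
  assumes "respects_relations \<phi>" "respects_relations \<psi>" "\<forall>v\<in>X. extend_hom \<psi> (\<phi> v) = gen v"
    and x: "x \<in> carrier G"
  shows "extend_hom \<psi> (extend_hom \<phi> x) = x"
proof -
  have "extend_hom \<psi> \<circ> extend_hom \<phi> \<in> hom G G"
    using hom_compose[OF extend_hom_hom extend_hom_hom] assms(1,2) by blast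
  then have "(extend_hom \<psi> \<circ> extend_hom \<phi>) x = (\<lambda>x\<in>carrier G. x) x"
    by (rule hom_eq_on_gens[OF _ id_hom_RAAG _ x]) (simp add: extend_hom_gen assms)
  then show ?thesis using x by simp
qed

lemma extend_hom_AutG:
  assumes \<phi>: "respects_relations \<phi>" and \<psi>: "respects_relations \<psi>"
    and inverse: "\<forall>v\<in>X. extend_hom \<psi> (\<phi> v) = gen v" "\<forall>v\<in>X. extend_hom \<phi> (\<psi> v) = gen v"
  shows "extend_hom \<phi> \<in> carrier AutG" "inv\<^bsub>AutG\<^esub> (extend_hom \<phi>) = extend_hom \<psi>"
proof -
  have c1: "\<forall>x\<in>carrier G. extend_hom \<psi> (extend_hom \<phi> x) = x"
    using extend_hom_left_inverse[OF \<phi> \<psi> inverse(1)] by blast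
  have c2: "\<forall>x\<in>carrier G. extend_hom \<phi> (extend_hom \<psi> x) = x"
    using extend_hom_left_inverse[OF \<psi> \<phi> inverse(2)] by blast
  have "bij_betw (extend_hom \<phi>) (carrier G) (carrier G)"
    "bij_betw (extend_hom \<psi>) (carrier G) (carrier G)"
    using bij_betw_byWitness[OF c1 c2] bij_betw_byWitness[OF c2 c1] extend_hom_carrier \<phi> \<psi> by auto
  then have a: "extend_hom \<phi> \<in> carrier AutG" "extend_hom \<psi> \<in> carrier AutG"
    using extend_hom_hom \<phi> \<psi> extend_hom_extensional by (auto simp: carrier_AutG auto_def Bij_def)
  then show "extend_hom \<phi> \<in> carrier AutG" by simp
  have "extend_hom \<psi> \<otimes>\<^bsub>AutG\<^esub> extend_hom \<phi> = \<one>\<^bsub>AutG\<^esub>"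
    by (rule extensionalityI[of _ "carrier G"]) (auto simp: mult_AutG a one_AutG compose_def c1)
  then show "inv\<^bsub>AutG\<^esub> (extend_hom \<phi>) = extend_hom \<psi>" using AutG.inv_equality a
    by blast
qed

section \<open>Elementary automorphisms\<close>

definition elem_images :: "'v \<Rightarrow> 'v word set \<Rightarrow> 'v word set \<Rightarrow> 'v \<Rightarrow> 'v word set" where
  "elem_images c p q v = (if v = c then p \<otimes>\<^bsub>G\<^esub> gen c \<otimes>\<^bsub>G\<^esub> q else gen v)"

definition elem_aut :: "'v \<Rightarrow> 'v word set \<Rightarrow> 'v word set \<Rightarrow> 'v word set \<Rightarrow> 'v word set" where
  "elem_aut c p q = extend_hom (elem_images c p q)"

definition dom_set :: "'v \<Rightarrow> 'v set" where "dom_set c = {d \<in> Z. dominates X E d c \<and> d \<noteq> c}"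

definition gen_span :: "'v set \<Rightarrow> 'v word set set" where "gen_span A = generate G (gen ` A)"

abbreviation "dom_span c \<equiv> gen_span (dom_set c)"

lemma dom_set_subset: "dom_set c \<subseteq> X" using Z_X by (auto simp: dom_set_def)
lemma notin_dom_set_self[simp]: "c \<notin> dom_set c" by (simp add: dom_set_def)

lemma gen_span_subset_carrier: "A \<subseteq> X \<Longrightarrow> gen_span A \<subseteq> carrier G"
  unfolding gen_span_def by (rule RAAG.generate_incl) auto

lemma gen_span_subgroup: "A \<subseteq> X \<Longrightarrow> subgroup (gen_span A) G"
  unfolding gen_span_def by (rule RAAG.generate_is_subgroup) auto

lemma gen_span_carrier[simp]: "A \<subseteq> X \<Longrightarrow> g \<in> gen_span A \<Longrightarrow> g \<in> carrier G"
  using gen_span_subset_carrier by (rule subsetD)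
lemma dom_span_carrier[simp]: "g \<in> dom_span c \<Longrightarrow> g \<in> carrier G"
  by (rule gen_span_carrier[OF dom_set_subset])

lemma gen_in_gen_span: "v \<in> A \<Longrightarrow> gen v \<in> gen_span A"
  by (simp add: gen_span_def generate.incl)

lemma gen_span_mono: "A \<subseteq> B \<Longrightarrow> gen_span A \<subseteq> gen_span B"
  unfolding gen_span_def by (intro RAAG.mono_generate) auto

lemma gen_span_mult[simp]: "A \<subseteq> X \<Longrightarrow> g \<in> gen_span A \<Longrightarrow> h \<in> gen_span A \<Longrightarrow> g \<otimes>\<^bsub>G\<^esub> h \<in> gen_span A"
  by (rule subgroup.m_closed[OF gen_span_subgroup])
lemma gen_span_inv[simp]: "A \<subseteq> X \<Longrightarrow> g \<in> gen_span A \<Longrightarrow> inv\<^bsub>G\<^esub> g \<in> gen_span A"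
  by (rule subgroup.m_inv_closed[OF gen_span_subgroup])
lemma gen_span_one[simp]: "\<one>\<^bsub>G\<^esub> \<in> gen_span A" by (simp add: gen_span_def generate.one)

lemma dom_span_mult[simp]: "g \<in> dom_span c \<Longrightarrow> h \<in> dom_span c \<Longrightarrow> g \<otimes>\<^bsub>G\<^esub> h \<in> dom_span c"
  using dom_set_subset by simp
lemma dom_span_inv[simp]: "g \<in> dom_span c \<Longrightarrow> inv\<^bsub>G\<^esub> g \<in> dom_span c"
  using dom_set_subset by simp

lemma hom_fixes_gen_span: assumes "h \<in> hom G G" "A \<subseteq> X" "\<forall>v\<in>A. h (gen v) = gen v" "g \<in> gen_span A"
  shows "h g = g"
proof -
  interpret gh: group_hom G G h using assms(1)
    by (simp add: group_hom_def group_hom_axioms_def RAAG.group_axioms)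
  show ?thesis using assms(4) unfolding gen_span_def
  proof (induction rule: generate.induct)
    case (inv x) thus ?case using assms(2,3) by auto
  next
    case (eng x y)
    have "gen ` A \<subseteq> carrier G" using assms(2) by auto
    hence "x \<in> carrier G" "y \<in> carrier G" using eng(1,2) RAAG.generate_in_carrier by auto
    thus ?case using eng by simp
  qed (use assms in auto)
qed

lemma commute_gen_span:
  assumes "x \<in> carrier G" "A \<subseteq> X" "\<forall>v\<in>A. x \<otimes>\<^bsub>G\<^esub> gen v = gen v \<otimes>\<^bsub>G\<^esub> x" "g \<in> gen_span A"
  shows "x \<otimes>\<^bsub>G\<^esub> g = g \<otimes>\<^bsub>G\<^esub> x"
  using assms(4) unfolding gen_span_def
proof (induction rule: generate.induct)
  case (inv h)
  then obtain v where "v \<in> A" "h = gen v" by auto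
  thus ?case using assms RAAG.commute_inv_right[of x "gen v"] by auto
next
  case (eng g h)
  have "gen ` A \<subseteq> carrier G" using assms(2) by auto
  hence "g \<in> carrier G" "h \<in> carrier G" using eng(1,2) RAAG.generate_in_carrier by auto
  thus ?case using eng assms(1) RAAG.commute_mult[of g h x] by simp
qed (use assms in auto)

lemma dominates_trans: assumes "dominates X E u v" "dominates X E v w" shows "dominates X E u w"
  unfolding dominates_def
proof
  fix x assume x: "x \<in> lk X E w"
  hence "x \<in> st X E v" using assms(2) by (auto simp: dominates_def)
  hence "x = v \<or> x \<in> lk X E v" by (simp add: st_def)
  thus "x \<in> st X E u"
  proof
    assume "x \<in> lk X E v" thus ?thesis using assms(1) by (auto simp: dominates_def)
  next
    assume xv: "x = v"
    hence "E w v" using x by (simp add: lk_def)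
    hence "w \<in> lk X E v" using E_sym E_X by (simp add: lk_def)
    hence "w \<in> st X E u" using assms(1) by (auto simp: dominates_def)
    hence "w = u \<or> E u w" by (auto simp: st_def lk_def)
    thus ?thesis
    proof
      assume "w = u" thus ?thesis using x by (simp add: st_def)
    next
      assume "E u w"
      hence "u \<in> lk X E w" using E_sym E_X by (simp add: lk_def)
      hence "u \<in> st X E v" using assms(2) by (auto simp: dominates_def)
      thus ?thesis using xv E_X E_sym by (auto simp: st_def lk_def)
    qed
  qed
qed

text \<open>Domination is used only here: a neighbour of \<open>c\<close> lies in the star of every \<open>d\<close> dominating
  \<open>c\<close>, so it commutes with \<open>A\<^sub>c\<close>, and \<open>c \<mapsto> p c q\<close> respects the relations.\<close>
lemma link_gen_commute_dom_span:
  assumes "E c w" "g \<in> dom_span c"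
  shows "gen w \<otimes>\<^bsub>G\<^esub> g = g \<otimes>\<^bsub>G\<^esub> gen w"
proof (rule commute_gen_span[OF _ dom_set_subset _ assms(2)])
  show "gen w \<in> carrier G" using assms E_X by simp
  show "\<forall>v\<in>dom_set c. gen w \<otimes>\<^bsub>G\<^esub> gen v = gen v \<otimes>\<^bsub>G\<^esub> gen w"
  proof
    fix d assume d: "d \<in> dom_set c"
    have "w \<in> lk X E c" using assms(1) E_X by (simp add: lk_def)
    hence "w \<in> st X E d" using d by (auto simp: dom_set_def dominates_def)
    hence "w = d \<or> E d w" by (auto simp: st_def lk_def)
    thus "gen w \<otimes>\<^bsub>G\<^esub> gen d = gen d \<otimes>\<^bsub>G\<^esub> gen w"
      using gen_commute E_sym by auto
  qed
qed

lemma respects_relations_elem_images: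
  assumes "c \<in> X" "p \<in> dom_span c" "q \<in> dom_span c"
  shows "respects_relations (elem_images c p q)"
  unfolding respects_relations_def
proof (intro conjI ballI allI impI)
  fix v assume "v \<in> X" thus "elem_images c p q v \<in> carrier G" using assms
    by (simp add: elem_images_def)
next
  fix v w assume e: "E v w"
  have vw: "v \<in> X" "w \<in> X" using e E_X by auto
  have key: "\<And>w. E c w \<Longrightarrow> (p \<otimes>\<^bsub>G\<^esub> gen c \<otimes>\<^bsub>G\<^esub> q) \<otimes>\<^bsub>G\<^esub> gen w = gen w \<otimes>\<^bsub>G\<^esub> (p \<otimes>\<^bsub>G\<^esub> gen c \<otimes>\<^bsub>G\<^esub> q)"
  proof -
    fix w assume e: "E c w"
    have w: "w \<in> X" using e E_X by auto
    have 1: "p \<otimes>\<^bsub>G\<^esub> gen w = gen w \<otimes>\<^bsub>G\<^esub> p" "q \<otimes>\<^bsub>G\<^esub> gen w = gen w \<otimes>\<^bsub>G\<^esub> q"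
      using link_gen_commute_dom_span[OF e assms(2)] link_gen_commute_dom_span[OF e assms(3)]
        by auto
    have 2: "gen c \<otimes>\<^bsub>G\<^esub> gen w = gen w \<otimes>\<^bsub>G\<^esub> gen c"
      using gen_commute[OF e] .
    show "?thesis w" using 1 2 RAAG.commute_mult assms w by simp
  qed
  show "elem_images c p q v \<otimes>\<^bsub>G\<^esub> elem_images c p q w = elem_images c p q w \<otimes>\<^bsub>G\<^esub> elem_images c p q v"
    using key[of w] key[of v] e E_sym[OF e] gen_commute[OF e]
    by (cases "v = c"; cases "w = c") (simp_all add: elem_images_def)
qed

lemma elem_aut_gen: "c \<in> X \<Longrightarrow> p \<in> dom_span c \<Longrightarrow> q \<in> dom_span c \<Longrightarrow> v \<in> X \<Longrightarrow>
   elem_aut c p q (gen v) = (if v = c then p \<otimes>\<^bsub>G\<^esub> gen c \<otimes>\<^bsub>G\<^esub> q else gen v)"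
  by (simp add: elem_aut_def extend_hom_gen respects_relations_elem_images elem_images_def)

lemma elem_aut_hom: "c \<in> X \<Longrightarrow> p \<in> dom_span c \<Longrightarrow> q \<in> dom_span c \<Longrightarrow> elem_aut c p q \<in> hom G G"
  by (simp add: elem_aut_def extend_hom_hom respects_relations_elem_images)

lemma elem_aut_fixes_gen_span:
  assumes "c \<in> X" "p \<in> dom_span c" "q \<in> dom_span c" "A \<subseteq> X" "c \<notin> A" "g \<in> gen_span A"
  shows "elem_aut c p q g = g"
proof (rule hom_fixes_gen_span[OF elem_aut_hom[OF assms(1-3)] assms(4) _ assms(6)], rule ballI)
  fix v assume "v \<in> A"
  hence "v \<in> X" "v \<noteq> c" using assms by auto
  thus "elem_aut c p q (gen v) = gen v" using elem_aut_gen assms by simp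
qed

lemma elem_aut_fixes_dom_span:
  "c \<in> X \<Longrightarrow> p \<in> dom_span c \<Longrightarrow> q \<in> dom_span c \<Longrightarrow> g \<in> dom_span c \<Longrightarrow> elem_aut c p q g = g"
  using elem_aut_fixes_gen_span[of c p q "dom_set c" g] dom_set_subset by simp

lemma elem_aut_elem_images:
  assumes "c \<in> X" "p \<in> dom_span c" "q \<in> dom_span c" "p' \<in> dom_span c" "q' \<in> dom_span c" "v \<in> X"
  shows "elem_aut c p q (elem_images c p' q' v) = elem_images c (p' \<otimes>\<^bsub>G\<^esub> p) (q \<otimes>\<^bsub>G\<^esub> q') v"
  using assms elem_aut_fixes_dom_span[OF assms(1-3)] elem_aut_hom[OF assms(1-3)]
  by (auto simp: elem_images_def elem_aut_gen hom_mult RAAG.m_assoc)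

lemma elem_aut_AutG:
  assumes c: "c \<in> X" and pq: "p \<in> dom_span c" "q \<in> dom_span c"
  shows "elem_aut c p q \<in> carrier AutG"
    "inv\<^bsub>AutG\<^esub> (elem_aut c p q) = elem_aut c (inv\<^bsub>G\<^esub> p) (inv\<^bsub>G\<^esub> q)"
proof -
  have inv_pq: "inv\<^bsub>G\<^esub> p \<in> dom_span c" "inv\<^bsub>G\<^esub> q \<in> dom_span c" using pq by simp_all
  have "\<forall>v\<in>X. elem_aut c (inv\<^bsub>G\<^esub> p) (inv\<^bsub>G\<^esub> q) (elem_images c p q v) = gen v"
    "\<forall>v\<in>X. elem_aut c p q (elem_images c (inv\<^bsub>G\<^esub> p) (inv\<^bsub>G\<^esub> q) v) = gen v"
    using elem_aut_elem_images[OF c inv_pq pq] elem_aut_elem_images[OF c pq inv_pq] pq c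
    by (simp_all add: elem_images_def)
  then show "elem_aut c p q \<in> carrier AutG"
    "inv\<^bsub>AutG\<^esub> (elem_aut c p q) = elem_aut c (inv\<^bsub>G\<^esub> p) (inv\<^bsub>G\<^esub> q)"
    unfolding elem_aut_def
    using extend_hom_AutG[OF respects_relations_elem_images[OF c pq] respects_relations_elem_images[OF c inv_pq]]
    by simp_all
qed

lemma elem_aut_mult:
  assumes "c \<in> X" "p \<in> dom_span c" "q \<in> dom_span c" "p' \<in> dom_span c" "q' \<in> dom_span c"
  shows "elem_aut c p q \<otimes>\<^bsub>AutG\<^esub> elem_aut c p' q' = elem_aut c (p' \<otimes>\<^bsub>G\<^esub> p) (q \<otimes>\<^bsub>G\<^esub> q')"
proof (rule AutG_eq_on_gens)
  show "elem_aut c p q \<otimes>\<^bsub>AutG\<^esub> elem_aut c p' q' \<in> carrier AutG"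
    "elem_aut c (p' \<otimes>\<^bsub>G\<^esub> p) (q \<otimes>\<^bsub>G\<^esub> q') \<in> carrier AutG"
    using elem_aut_AutG assms by simp_all
  then show "\<forall>v\<in>X. (elem_aut c p q \<otimes>\<^bsub>AutG\<^esub> elem_aut c p' q') (gen v)
      = elem_aut c (p' \<otimes>\<^bsub>G\<^esub> p) (q \<otimes>\<^bsub>G\<^esub> q') (gen v)"
    using elem_aut_elem_images[OF assms] elem_aut_AutG assms
    by (simp add: mult_AutG_apply elem_aut_def extend_hom_gen respects_relations_elem_images)
qed

lemma elem_aut_one: "c \<in> X \<Longrightarrow> elem_aut c \<one>\<^bsub>G\<^esub> \<one>\<^bsub>G\<^esub> = \<one>\<^bsub>AutG\<^esub>"
  by (rule AutG_eq_on_gens, simp add: elem_aut_AutG, rule AutG.one_closed)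
    (auto simp: elem_aut_gen one_AutG)

lemma extend_hom_cong:
  assumes "respects_relations \<phi>" "\<forall>v\<in>X. \<phi> v = \<psi> v"
  shows "extend_hom \<phi> = extend_hom \<psi>"
proof (rule extensionalityI[of _ "carrier G"])
  show "extend_hom \<phi> \<in> extensional (carrier G)" "extend_hom \<psi> \<in> extensional (carrier G)"
    by (rule extend_hom_extensional)+
  fix x assume "x \<in> carrier G"
  then obtain w where w: "w \<in> words X" "x = word_class w" using carrier_word_class by blast
  have g2: "respects_relations \<psi>" by (rule respects_relations_cong[OF assms])
  show "extend_hom \<phi> x = extend_hom \<psi> x"
    using w extend_hom_word_class[OF assms(1)] extend_hom_word_class[OF g2]
      eval_word_cong[OF assms(2)]
      by simp
qed

lemma induced_eq_elem_aut: assumes "\<forall>v\<in>X. f v \<in> words X" "c \<in> X" "p \<in> dom_span c" "q \<in> dom_span c"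
  "\<forall>v\<in>X. word_class (f v) = elem_images c p q v"
  shows "induced X E f = elem_aut c p q"
proof -
  have g: "respects_relations (\<lambda>v. word_class (f v))"
    using respects_relations_cong[OF respects_relations_elem_images[OF assms(2-4)]] assms(5)
      by simp
  have "induced X E f = extend_hom (\<lambda>v. word_class (f v))"
    by (rule induced_eq_extend_hom[OF assms(1) g])
  also have "\<dots> = elem_aut c p q" unfolding elem_aut_def by (rule extend_hom_cong[OF g assms(5)])
  finally show ?thesis .
qed

lemma mem_letters_iff: "(a \<in> letters Z) = (fst a \<in> Z)" by (cases a) (simp add: letters_def)

lemma letter_elt_dom_span: "fst a \<in> dom_set c \<Longrightarrow> letter_elt a \<in> dom_span c"
  by (simp add: letter_elt_def gen_in_gen_span)

lemma mem_dom_set_iff: "(d \<in> dom_set c) = (d \<in> Z \<and> dominates X E d c \<and> d \<noteq> c)"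
  by (simp add: dom_set_def)

lemma Z_vertex: "c \<in> Z \<Longrightarrow> c \<in> X" using Z_X by auto
lemma dom_set_vertex: "d \<in> dom_set c \<Longrightarrow> d \<in> X" using dom_set_subset by auto

lemma send_letter_words:
  assumes "fst v \<in> X" "w \<in> words X"
  shows "\<forall>y\<in>X. send_letter v w y \<in> words X"
  using assms by (simp add: send_letter_def)

lemma word_class_gen: "word_class [(v, False)] = gen v" by (simp add: gen_def)

section \<open>The generators of \<open>G\<^sub>Z\<close> and \<open>K\<^sub>Z\<close>\<close>

lemma induced_send_letter_eq_elem_aut:
  assumes v: "fst v \<in> X" and w: "w \<in> words X" and pq: "p \<in> dom_span (fst v)" "q \<in> dom_span (fst v)"
    and image: "word_class w = letter_image (elem_images (fst v) p q) v"
  shows "induced X E (send_letter v w) = elem_aut (fst v) p q"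
proof (rule induced_eq_elem_aut[OF send_letter_words[OF v w] v pq])
  show "\<forall>y\<in>X. word_class (send_letter v w y) = elem_images (fst v) p q y"
    using image v w pq
    by (cases "snd v") (simp_all add: send_letter_def letter_image_def elem_images_def word_class_gen
        word_class_inv_word)
qed

lemma transvection_eq_elem_aut:
  assumes "fst b \<in> Z" "fst a \<in> dom_set (fst b)"
  shows "transvection X E a b = (if snd b then elem_aut (fst b) (inv\<^bsub>G\<^esub> (letter_elt a)) \<one>\<^bsub>G\<^esub>
                                 else elem_aut (fst b) \<one>\<^bsub>G\<^esub> (letter_elt a))"
proof -
  have X: "fst b \<in> X" "fst a \<in> X" using assms Z_vertex dom_set_vertex by auto
  have a: "letter_elt a \<in> dom_span (fst b)" using assms letter_elt_dom_span by auto
  have "word_class [b, a] = letter_elt b \<otimes>\<^bsub>G\<^esub> letter_elt a"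
    using X by (simp add: word_class_Cons word_class_Nil)
  then show ?thesis
    using induced_send_letter_eq_elem_aut[OF X(1) _ _ _, of "[b, a]"] X a
    by (cases "snd b") (simp_all add: transvection_def letter_image_def elem_images_def letter_elt_def
        RAAG.group_cancel_simps)
qed

lemma pconj_eq_elem_aut:
  assumes "fst c \<in> Z" "fst x \<in> dom_set (fst c)"
  shows "pconj X E x c = elem_aut (fst c) (inv\<^bsub>G\<^esub> (letter_elt x)) (letter_elt x)"
proof -
  have X: "fst c \<in> X" "fst x \<in> X" using assms Z_vertex dom_set_vertex by auto
  have x: "letter_elt x \<in> dom_span (fst c)" using assms letter_elt_dom_span by auto
  have "word_class [inv_letter x, c, x] = inv\<^bsub>G\<^esub> (letter_elt x) \<otimes>\<^bsub>G\<^esub> letter_elt c \<otimes>\<^bsub>G\<^esub> letter_elt x"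
    using X by
      (simp add: word_class_Cons word_class_Nil letter_elt_inv_letter RAAG.group_cancel_simps)
  then show ?thesis
    using induced_send_letter_eq_elem_aut[OF X(1) _ dom_span_inv[OF x] x, of "[inv_letter x, c, x]"] X
    by (cases "snd c") (simp_all add: pconj_def letter_image_def elem_images_def letter_elt_def
        RAAG.group_cancel_simps)
qed

lemma commutator_dom_span [simp]:
  "g \<in> dom_span c \<Longrightarrow> h \<in> dom_span c \<Longrightarrow> commutator G g h \<in> dom_span c"
  by (simp add: commutator_def)

lemma comm_transvection_eq_elem_aut:
  assumes "fst c \<in> Z" "fst x \<in> dom_set (fst c)" "fst y \<in> dom_set (fst c)"
  shows "comm_transvection X E x y c =
    (if snd c then elem_aut (fst c) (commutator G (letter_elt y) (letter_elt x)) \<one>\<^bsub>G\<^esub>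
     else elem_aut (fst c) \<one>\<^bsub>G\<^esub> (commutator G (letter_elt x) (letter_elt y)))"
proof -
  have X: "fst c \<in> X" "fst x \<in> X" "fst y \<in> X" using assms Z_vertex dom_set_vertex by auto
  have xy: "letter_elt x \<in> dom_span (fst c)" "letter_elt y \<in> dom_span (fst c)"
    using assms letter_elt_dom_span by auto
  have "word_class [c, inv_letter x, inv_letter y, x, y]
      = letter_elt c \<otimes>\<^bsub>G\<^esub> commutator G (letter_elt x) (letter_elt y)"
    using X by (simp add: word_class_Cons word_class_Nil letter_elt_inv_letter commutator_def
        RAAG.group_cancel_simps)
  then show ?thesis
    using induced_send_letter_eq_elem_aut[OF X(1), of "[c, inv_letter x, inv_letter y, x, y]"] X xy
    by (cases "snd c") (simp_all add: comm_transvection_def letter_image_def elem_images_def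
        letter_elt_def commutator_def RAAG.group_cancel_simps)
qed

definition inner :: "'v word set \<Rightarrow> 'v word set \<Rightarrow> 'v word set" where
  "inner g = (\<lambda>h\<in>carrier G. inv\<^bsub>G\<^esub> g \<otimes>\<^bsub>G\<^esub> h \<otimes>\<^bsub>G\<^esub> g)"

lemma inner_auts_eq_image: "inner_auts X E = inner ` carrier G"
  by (auto simp: inner_auts_def inner_def)

lemma inner_hom: "g \<in> carrier G \<Longrightarrow> inner g \<in> hom G G"
  by (rule homI) (auto simp: inner_def RAAG.group_cancel_simps)

lemma inner_AutG: assumes "g \<in> carrier G" shows "inner g \<in> carrier AutG"
proof -
  have c1: "\<forall>x\<in>carrier G. inner (inv\<^bsub>G\<^esub> g) (inner g x) = x" using assms
    by (auto simp: inner_def RAAG.group_cancel_simps)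
  have c2: "\<forall>x\<in>carrier G. inner g (inner (inv\<^bsub>G\<^esub> g) x) = x" using assms
    by (auto simp: inner_def RAAG.group_cancel_simps)
  have "bij_betw (inner g) (carrier G) (carrier G)"
    by (rule bij_betw_byWitness[OF c1 c2]) (auto simp: inner_def assms)
  moreover have "inner g \<in> extensional (carrier G)" by (simp add: inner_def)
  ultimately show ?thesis using inner_hom[OF assms] by (simp add: carrier_AutG auto_def Bij_def)
qed

lemma mult_inner_commute: assumes "f \<in> carrier AutG" "g \<in> carrier G"
  shows "f \<otimes>\<^bsub>AutG\<^esub> inner g = inner (f g) \<otimes>\<^bsub>AutG\<^esub> f"
proof -
  have fg: "f g \<in> carrier G" using AutG_apply_carrier assms by blast
  have h: "f \<in> hom G G" using AutG_hom assms by blast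
  show ?thesis
  proof (rule AutG_eq_on_gens)
    show "f \<otimes>\<^bsub>AutG\<^esub> inner g \<in> carrier AutG" using inner_AutG assms by simp
    show "inner (f g) \<otimes>\<^bsub>AutG\<^esub> f \<in> carrier AutG" using inner_AutG fg assms by simp
    show "\<forall>v\<in>X. (f \<otimes>\<^bsub>AutG\<^esub> inner g) (gen v) = (inner (f g) \<otimes>\<^bsub>AutG\<^esub> f) (gen v)"
    proof
      fix v assume v: "v \<in> X"
      have fv: "f (gen v) \<in> carrier G" using AutG_apply_carrier assms v by simp
      have "(f \<otimes>\<^bsub>AutG\<^esub> inner g) (gen v) = f (inv\<^bsub>G\<^esub> g \<otimes>\<^bsub>G\<^esub> gen v \<otimes>\<^bsub>G\<^esub> g)"
        using assms v inner_AutG by (simp add: mult_AutG_apply inner_def)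
      also have "\<dots> = inv\<^bsub>G\<^esub> (f g) \<otimes>\<^bsub>G\<^esub> f (gen v) \<otimes>\<^bsub>G\<^esub> f g"
        using h assms v
          by (simp add: hom_mult group_hom.hom_inv[of G G f] group_hom_def group_hom_axioms_def)
      also have "\<dots> = (inner (f g) \<otimes>\<^bsub>AutG\<^esub> f) (gen v)"
        using assms v inner_AutG fg fv by (simp add: mult_AutG_apply inner_def)
      finally show "(f \<otimes>\<^bsub>AutG\<^esub> inner g) (gen v) = (inner (f g) \<otimes>\<^bsub>AutG\<^esub> f) (gen v)" .
    qed
  qed
qed

lemma derived_dom_span_subgroup: "subgroup (derived G (dom_span c)) G"
  by (rule RAAG.derived_is_subgroup[OF gen_span_subset_carrier[OF dom_set_subset]])

lemma derived_dom_span_subset: "derived G (dom_span c) \<subseteq> dom_span c"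
  by (rule RAAG.derived_incl[OF subset_refl gen_span_subgroup[OF dom_set_subset]])

lemma commutator_mem_derived_dom_span [simp]:
  "g \<in> dom_span c \<Longrightarrow> h \<in> dom_span c \<Longrightarrow> commutator G g h \<in> derived G (dom_span c)"
  by (rule RAAG.commutator_mem_derived[OF gen_span_subgroup[OF dom_set_subset]])

lemma derived_dom_span_mult [simp]:
  "x \<in> derived G (dom_span c) \<Longrightarrow> y \<in> derived G (dom_span c) \<Longrightarrow> x \<otimes>\<^bsub>G\<^esub> y \<in> derived G (dom_span c)"
  by (rule subgroup.m_closed[OF derived_dom_span_subgroup])

lemma derived_dom_span_inv [simp]:
  "x \<in> derived G (dom_span c) \<Longrightarrow> inv\<^bsub>G\<^esub> x \<in> derived G (dom_span c)"
  by (rule subgroup.m_inv_closed[OF derived_dom_span_subgroup])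

lemma derived_dom_span_one [simp]: "\<one>\<^bsub>G\<^esub> \<in> derived G (dom_span c)"
  by (rule subgroup.one_closed[OF derived_dom_span_subgroup])

lemma derived_dom_span_mem [simp]: "x \<in> derived G (dom_span c) \<Longrightarrow> x \<in> dom_span c"
  using derived_dom_span_subset by blast

lemma elem_aut_carrier [simp]:
  "c \<in> X \<Longrightarrow> p \<in> dom_span c \<Longrightarrow> q \<in> dom_span c \<Longrightarrow> elem_aut c p q \<in> carrier AutG"
  using elem_aut_AutG by blast

text \<open>The partial conjugations \<open>c \<mapsto> d\<inverse> c d\<close> and the commutator transvections
  \<open>c \<mapsto> c [d\<^sub>1, d\<^sub>2]\<close> by positive letters; they generate all \<open>elem_aut c p q\<close> with
  \<open>p q \<in> [A\<^sub>c, A\<^sub>c]\<close>.\<close>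
definition basic_auts :: "'v \<Rightarrow> ('v word set \<Rightarrow> 'v word set) set" where
  "basic_auts c =
     {elem_aut c (inv\<^bsub>G\<^esub> gen d) (gen d) | d. d \<in> dom_set c} \<union>
     {elem_aut c \<one>\<^bsub>G\<^esub> (commutator G (gen d\<^sub>1) (gen d\<^sub>2)) | d\<^sub>1 d\<^sub>2. d\<^sub>1 \<in> dom_set c \<and> d\<^sub>2 \<in> dom_set c}"

lemma elem_aut_conj_pair_mem:
  assumes K: "subgroup K AutG" and c: "c \<in> X"
    and pconj: "\<And>d. d \<in> dom_set c \<Longrightarrow> elem_aut c (inv\<^bsub>G\<^esub> gen d) (gen d) \<in> K"
    and g: "g \<in> dom_span c"
  shows "elem_aut c (inv\<^bsub>G\<^esub> g) g \<in> K"
  using g unfolding gen_span_def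
proof (induction rule: generate.induct)
  case one
  then show ?case using elem_aut_one[OF c] subgroup.one_closed[OF K] by simp
next
  case (incl h)
  then show ?case using pconj by auto
next
  case (inv h)
  then obtain d where d: "d \<in> dom_set c" "h = gen d" by auto
  then have "elem_aut c (inv\<^bsub>G\<^esub> gen d) (gen d) \<in> K" using pconj by blast
  moreover have
    "elem_aut c (inv\<^bsub>G\<^esub> (inv\<^bsub>G\<^esub> h)) (inv\<^bsub>G\<^esub> h) = inv\<^bsub>AutG\<^esub> (elem_aut c (inv\<^bsub>G\<^esub> gen d) (gen d))"
    using d gen_in_gen_span[of d "dom_set c"] elem_aut_AutG(2)[OF c] by simp
  ultimately show ?case using subgroup.m_inv_closed[OF K] by simp
next
  case (eng h1 h2)
  have "h1 \<in> dom_span c" "h2 \<in> dom_span c" using eng(1,2) unfolding gen_span_def by auto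
  then have "elem_aut c (inv\<^bsub>G\<^esub> h1) h1 \<otimes>\<^bsub>AutG\<^esub> elem_aut c (inv\<^bsub>G\<^esub> h2) h2
      = elem_aut c (inv\<^bsub>G\<^esub> (h1 \<otimes>\<^bsub>G\<^esub> h2)) (h1 \<otimes>\<^bsub>G\<^esub> h2)"
    using elem_aut_mult[OF c] by (simp add: RAAG.inv_mult_group)
  then show ?case using eng subgroup.m_closed[OF K] by metis
qed

lemma elem_aut_right_subgroup:
  assumes K: "subgroup K AutG" and c: "c \<in> X"
  shows "subgroup {w \<in> dom_span c. elem_aut c \<one>\<^bsub>G\<^esub> w \<in> K} G"
proof (rule RAAG.subgroupI)
  show "{w \<in> dom_span c. elem_aut c \<one>\<^bsub>G\<^esub> w \<in> K} \<subseteq> carrier G"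
    using dom_span_carrier by blast
  have "\<one>\<^bsub>G\<^esub> \<in> {w \<in> dom_span c. elem_aut c \<one>\<^bsub>G\<^esub> w \<in> K}"
    using elem_aut_one[OF c] subgroup.one_closed[OF K] by simp
  then show "{w \<in> dom_span c. elem_aut c \<one>\<^bsub>G\<^esub> w \<in> K} \<noteq> {}" by blast
next
  fix x assume "x \<in> {w \<in> dom_span c. elem_aut c \<one>\<^bsub>G\<^esub> w \<in> K}"
  then have x: "x \<in> dom_span c" "elem_aut c \<one>\<^bsub>G\<^esub> x \<in> K" by auto
  have "elem_aut c \<one>\<^bsub>G\<^esub> (inv\<^bsub>G\<^esub> x) = inv\<^bsub>AutG\<^esub> (elem_aut c \<one>\<^bsub>G\<^esub> x)"
    using elem_aut_AutG(2)[OF c gen_span_one x(1)] by simp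
  then show "inv\<^bsub>G\<^esub> x \<in> {w \<in> dom_span c. elem_aut c \<one>\<^bsub>G\<^esub> w \<in> K}"
    using dom_span_inv[OF x(1)] subgroup.m_inv_closed[OF K x(2)] by simp
next
  fix x y
  assume "x \<in> {w \<in> dom_span c. elem_aut c \<one>\<^bsub>G\<^esub> w \<in> K}" "y \<in> {w \<in> dom_span c. elem_aut c \<one>\<^bsub>G\<^esub> w \<in> K}"
  then have xy: "x \<in> dom_span c" "elem_aut c \<one>\<^bsub>G\<^esub> x \<in> K" "y \<in> dom_span c" "elem_aut c \<one>\<^bsub>G\<^esub> y \<in> K"
    by auto
  have "elem_aut c \<one>\<^bsub>G\<^esub> (x \<otimes>\<^bsub>G\<^esub> y) = elem_aut c \<one>\<^bsub>G\<^esub> x \<otimes>\<^bsub>AutG\<^esub> elem_aut c \<one>\<^bsub>G\<^esub> y"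
    using elem_aut_mult[OF c gen_span_one xy(1) gen_span_one xy(3)] by simp
  then show "x \<otimes>\<^bsub>G\<^esub> y \<in> {w \<in> dom_span c. elem_aut c \<one>\<^bsub>G\<^esub> w \<in> K}"
    using dom_span_mult[OF xy(1,3)] subgroup.m_closed[OF K xy(2,4)] by simp
qed

lemma elem_aut_right_derived_mem:
  assumes K: "subgroup K AutG" and c: "c \<in> X" and basic: "basic_auts c \<subseteq> K"
    and w: "w \<in> derived G (dom_span c)"
  shows "elem_aut c \<one>\<^bsub>G\<^esub> w \<in> K"
proof -
  have pconj: "elem_aut c (inv\<^bsub>G\<^esub> gen d) (gen d) \<in> K" if "d \<in> dom_set c" for d
    using that basic by (auto simp: basic_auts_def)
  define S where "S = {x \<in> dom_span c. elem_aut c \<one>\<^bsub>G\<^esub> x \<in> K}"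
  have S: "subgroup S G" unfolding S_def by (rule elem_aut_right_subgroup[OF K c])
  have conj: "g \<otimes>\<^bsub>G\<^esub> x \<otimes>\<^bsub>G\<^esub> inv\<^bsub>G\<^esub> g \<in> S" if "g \<in> dom_span c" "x \<in> S" for g x
  proof -
    have "elem_aut c (inv\<^bsub>G\<^esub> g) g \<otimes>\<^bsub>AutG\<^esub> elem_aut c \<one>\<^bsub>G\<^esub> x \<otimes>\<^bsub>AutG\<^esub> elem_aut c g (inv\<^bsub>G\<^esub> g)
        = elem_aut c \<one>\<^bsub>G\<^esub> (g \<otimes>\<^bsub>G\<^esub> x \<otimes>\<^bsub>G\<^esub> inv\<^bsub>G\<^esub> g)"
      using that elem_aut_mult[OF c] by (simp add: S_def RAAG.group_cancel_simps)
    moreover have "elem_aut c g (inv\<^bsub>G\<^esub> g) \<in> K"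
      using elem_aut_conj_pair_mem[OF K c pconj dom_span_inv[OF that(1)]] that(1) by simp
    ultimately show ?thesis
      using that elem_aut_conj_pair_mem[OF K c pconj that(1)] subgroup.m_closed[OF K]
      by (simp add: S_def) metis
  qed
  have "derived G (dom_span c) \<subseteq> S"
    unfolding gen_span_def
  proof (rule RAAG.derived_generate_subset[OF _ S])
    show "gen ` dom_set c \<subseteq> carrier G" using dom_set_vertex by auto
    show "g \<otimes>\<^bsub>G\<^esub> s \<otimes>\<^bsub>G\<^esub> inv\<^bsub>G\<^esub> g \<in> S" if "g \<in> generate G (gen ` dom_set c)" "s \<in> S" for g s
      using conj that by (simp add: gen_span_def)
    show "commutator G a b \<in> S" if ab: "a \<in> gen ` dom_set c" "b \<in> gen ` dom_set c" for a b
    proof -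
      obtain d\<^sub>1 d\<^sub>2 where d: "d\<^sub>1 \<in> dom_set c" "d\<^sub>2 \<in> dom_set c" "a = gen d\<^sub>1" "b = gen d\<^sub>2"
        using ab by blast
      then have "elem_aut c \<one>\<^bsub>G\<^esub> (commutator G a b) \<in> K" using basic
        by (auto simp: basic_auts_def)
      then show ?thesis using d gen_in_gen_span[of _ "dom_set c"] by (simp add: S_def)
    qed
  qed
  then show ?thesis using w by (auto simp: S_def)
qed

lemma elem_aut_mem_subgroup:
  assumes K: "subgroup K AutG" and c: "c \<in> X" and basic: "basic_auts c \<subseteq> K"
    and pq: "p \<in> dom_span c" "q \<in> dom_span c" "p \<otimes>\<^bsub>G\<^esub> q \<in> derived G (dom_span c)"
  shows "elem_aut c p q \<in> K"
proof -
  have pconj: "elem_aut c (inv\<^bsub>G\<^esub> gen d) (gen d) \<in> K" if "d \<in> dom_set c" for d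
    using that basic by (auto simp: basic_auts_def)
  have "elem_aut c p (inv\<^bsub>G\<^esub> p) \<otimes>\<^bsub>AutG\<^esub> elem_aut c \<one>\<^bsub>G\<^esub> (p \<otimes>\<^bsub>G\<^esub> q) = elem_aut c p q"
    using elem_aut_mult[OF c] pq by (simp add: RAAG.group_cancel_simps)
  moreover have "elem_aut c p (inv\<^bsub>G\<^esub> p) \<in> K"
    using elem_aut_conj_pair_mem[OF K c pconj dom_span_inv[OF pq(1)]] pq(1) by simp
  ultimately show ?thesis
    using elem_aut_right_derived_mem[OF K c basic pq(3)] subgroup.m_closed[OF K] by metis
qed

abbreviation "KK \<equiv> K_Z X E Z"
abbreviation "GG \<equiv> G_Z X E Z"

lemma K_gens_cases:
  assumes "k \<in> K_gens X E Z"
  obtains g where "g \<in> carrier G" "k = inner g"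
    | c p q where "c \<in> Z" "p \<in> dom_span c" "q \<in> dom_span c" "p \<otimes>\<^bsub>G\<^esub> q \<in> derived G (dom_span c)"
      "k = elem_aut c p q"
proof -
  consider (comm) x y c where "x \<in> letters Z" "y \<in> letters Z" "c \<in> letters Z"
      "dominates X E (fst x) (fst c)" "dominates X E (fst y) (fst c)"
      "fst x \<noteq> fst y" "fst x \<noteq> fst c" "fst y \<noteq> fst c" "k = comm_transvection X E x y c"
    | (pc) x c where "x \<in> letters Z" "c \<in> letters Z" "dominates X E (fst x) (fst c)" "fst x \<noteq> fst c"
      "k = pconj X E x c"
    | (inn) "k \<in> inner_auts X E"
    using assms unfolding K_gens_def by blast
  then show ?thesis
  proof cases
    case comm
    have d: "fst c \<in> Z" "fst x \<in> dom_set (fst c)" "fst y \<in> dom_set (fst c)"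
      using comm by (auto simp: mem_letters_iff mem_dom_set_iff)
    have w: "letter_elt x \<in> dom_span (fst c)" "letter_elt y \<in> dom_span (fst c)"
      using d letter_elt_dom_span by auto
    show ?thesis
    proof (cases "snd c")
      case True
      then show ?thesis
        using that(2)[OF d(1), of "commutator G (letter_elt y) (letter_elt x)" "\<one>\<^bsub>G\<^esub>"]
          comm_transvection_eq_elem_aut[OF d] comm w by simp
    next
      case False
      then show ?thesis
        using that(2)[OF d(1), of "\<one>\<^bsub>G\<^esub>" "commutator G (letter_elt x) (letter_elt y)"]
          comm_transvection_eq_elem_aut[OF d] comm w by simp
    qed
  next
    case pc
    have d: "fst c \<in> Z" "fst x \<in> dom_set (fst c)" using pc
      by (auto simp: mem_letters_iff mem_dom_set_iff)
    then show ?thesis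
      using that(2)[OF d(1), of "inv\<^bsub>G\<^esub> (letter_elt x)" "letter_elt x"] pconj_eq_elem_aut[OF d] pc
        letter_elt_dom_span[OF d(2)] by simp
  next
    case inn
    then show ?thesis using that(1) by (auto simp: inner_auts_eq_image)
  qed
qed

lemma K_gens_carrier: "K_gens X E Z \<subseteq> carrier AutG"
  using inner_AutG elem_aut_carrier Z_vertex by (auto elim: K_gens_cases)

lemma K_subgroup: "subgroup KK AutG"
  unfolding K_Z_def by (rule AutG.generate_is_subgroup[OF K_gens_carrier])

lemma K_carrier: "k \<in> KK \<Longrightarrow> k \<in> carrier AutG"
  using subgroup.mem_carrier[OF K_subgroup] by blast

lemma K_gens_mem: "k \<in> K_gens X E Z \<Longrightarrow> k \<in> KK" unfolding K_Z_def
  by (rule generate.incl)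

lemma inner_mem_K: "g \<in> carrier G \<Longrightarrow> inner g \<in> KK"
  by (rule K_gens_mem) (auto simp: K_gens_def inner_auts_eq_image)

lemma basic_auts_subset_K:
  assumes c: "c \<in> Z"
  shows "basic_auts c \<subseteq> KK"
proof -
  have pconj: "elem_aut c (inv\<^bsub>G\<^esub> gen d) (gen d) \<in> KK" if d: "d \<in> dom_set c" for d
  proof -
    have "pconj X E (d, False) (c, False) \<in> K_gens X E Z"
      using d c unfolding K_gens_def by (fastforce simp: mem_letters_iff mem_dom_set_iff)
    then show ?thesis
      using pconj_eq_elem_aut[of "(c, False)" "(d, False)"] c d K_gens_mem by simp
  qed
  have comm: "elem_aut c \<one>\<^bsub>G\<^esub> (commutator G (gen d\<^sub>1) (gen d\<^sub>2)) \<in> KK"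
    if d: "d\<^sub>1 \<in> dom_set c" "d\<^sub>2 \<in> dom_set c" for d\<^sub>1 d\<^sub>2
  proof (cases "d\<^sub>1 = d\<^sub>2")
    case True
    then show ?thesis
      using d dom_set_vertex elem_aut_one Z_vertex[OF c] subgroup.one_closed[OF K_subgroup]
        by simp
  next
    case False
    have "comm_transvection X E (d\<^sub>1, False) (d\<^sub>2, False) (c, False) \<in> K_gens X E Z"
      using d c False unfolding K_gens_def by (fastforce simp: mem_letters_iff mem_dom_set_iff)
    then show ?thesis
      using comm_transvection_eq_elem_aut[of "(c, False)" "(d\<^sub>1, False)" "(d\<^sub>2, False)"] c d
        K_gens_mem
      by simp
  qed
  show ?thesis using pconj comm by (auto simp: basic_auts_def)
qed

lemma elem_aut_mem_K:
  "c \<in> Z \<Longrightarrow> p \<in> dom_span c \<Longrightarrow> q \<in> dom_span c \<Longrightarrow> p \<otimes>\<^bsub>G\<^esub> q \<in> derived G (dom_span c) \<Longrightarrow>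
    elem_aut c p q \<in> KK"
  by (rule elem_aut_mem_subgroup[OF K_subgroup Z_vertex basic_auts_subset_K])

section \<open>Transvections normalise \<open>K\<^sub>Z\<close>\<close>

definition conj_into_K :: "('v word set \<Rightarrow> 'v word set) \<Rightarrow> ('v word set \<Rightarrow> 'v word set) set" where
  "conj_into_K f = {k \<in> carrier AutG. f \<otimes>\<^bsub>AutG\<^esub> k \<otimes>\<^bsub>AutG\<^esub> inv\<^bsub>AutG\<^esub> f \<in> KK}"

lemma conj_into_K_subgroup: assumes f: "f \<in> carrier AutG" shows "subgroup (conj_into_K f) AutG"
proof (rule AutG.subgroupI)
  show "conj_into_K f \<subseteq> carrier AutG" by (auto simp: conj_into_K_def)
  show "conj_into_K f \<noteq> {}"
  proof -
    have "f \<otimes>\<^bsub>AutG\<^esub> \<one>\<^bsub>AutG\<^esub> \<otimes>\<^bsub>AutG\<^esub> inv\<^bsub>AutG\<^esub> f = \<one>\<^bsub>AutG\<^esub>"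
      using f by simp
    hence "\<one>\<^bsub>AutG\<^esub> \<in> conj_into_K f" using subgroup.one_closed[OF K_subgroup]
      by (simp add: conj_into_K_def)
    thus ?thesis by blast
  qed
next
  fix k assume k: "k \<in> conj_into_K f"
  have kc: "k \<in> carrier AutG" using k by (simp add: conj_into_K_def)
  have "f \<otimes>\<^bsub>AutG\<^esub> inv\<^bsub>AutG\<^esub> k \<otimes>\<^bsub>AutG\<^esub> inv\<^bsub>AutG\<^esub> f = inv\<^bsub>AutG\<^esub> (f \<otimes>\<^bsub>AutG\<^esub> k \<otimes>\<^bsub>AutG\<^esub> inv\<^bsub>AutG\<^esub> f)"
    using f kc by (simp add: AutG.group_cancel_simps)
  thus "inv\<^bsub>AutG\<^esub> k \<in> conj_into_K f" using k kc subgroup.m_inv_closed[OF K_subgroup]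
    by (simp add: conj_into_K_def)
next
  fix k h assume k: "k \<in> conj_into_K f" and h: "h \<in> conj_into_K f"
  have kc: "k \<in> carrier AutG" "h \<in> carrier AutG" using k h by (auto simp: conj_into_K_def)
  have "f \<otimes>\<^bsub>AutG\<^esub> (k \<otimes>\<^bsub>AutG\<^esub> h) \<otimes>\<^bsub>AutG\<^esub> inv\<^bsub>AutG\<^esub> f
     = (f \<otimes>\<^bsub>AutG\<^esub> k \<otimes>\<^bsub>AutG\<^esub> inv\<^bsub>AutG\<^esub> f) \<otimes>\<^bsub>AutG\<^esub> (f \<otimes>\<^bsub>AutG\<^esub> h \<otimes>\<^bsub>AutG\<^esub> inv\<^bsub>AutG\<^esub> f)"
    using f kc by (simp add: AutG.group_cancel_simps)
  thus "k \<otimes>\<^bsub>AutG\<^esub> h \<in> conj_into_K f" using k h kc subgroup.m_closed[OF K_subgroup]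
    by (simp add: conj_into_K_def)
qed

lemma conj_into_K_intro:
  assumes "f \<in> carrier AutG" "k \<in> carrier AutG" "F \<in> KK" "f \<otimes>\<^bsub>AutG\<^esub> k = F \<otimes>\<^bsub>AutG\<^esub> f"
  shows "k \<in> conj_into_K f"
proof -
  have Fc: "F \<in> carrier AutG" using K_carrier assms by blast
  have "f \<otimes>\<^bsub>AutG\<^esub> k \<otimes>\<^bsub>AutG\<^esub> inv\<^bsub>AutG\<^esub> f = F"
    using assms Fc by (simp add: AutG.group_cancel_simps)
  thus ?thesis using assms by (simp add: conj_into_K_def)
qed

lemma K_subset_conj_into_K:
  assumes f: "f \<in> carrier AutG" and basic: "\<And>c. c \<in> Z \<Longrightarrow> basic_auts c \<subseteq> conj_into_K f"
  shows "KK \<subseteq> conj_into_K f"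
  unfolding K_Z_def
proof (rule AutG.generate_subgroup_incl[OF _ conj_into_K_subgroup[OF f]], rule subsetI)
  fix k assume "k \<in> K_gens X E Z"
  then show "k \<in> conj_into_K f"
  proof (cases rule: K_gens_cases)
    case (1 g)
    have "f \<otimes>\<^bsub>AutG\<^esub> inner g = inner (f g) \<otimes>\<^bsub>AutG\<^esub> f"
      using mult_inner_commute[OF f 1(1)] .
    moreover have "inner (f g) \<in> KK" using inner_mem_K AutG_apply_carrier f 1 by blast
    ultimately show ?thesis using conj_into_K_intro[OF f inner_AutG[OF 1(1)]] 1 by simp
  next
    case (2 c p q)
    then show ?thesis
      using elem_aut_mem_subgroup[OF conj_into_K_subgroup[OF f] Z_vertex basic] by simp
  qed
qed

lemma elem_aut_apply_mult:
  "c \<in> X \<Longrightarrow> p \<in> dom_span c \<Longrightarrow> q \<in> dom_span c \<Longrightarrow> x \<in> carrier G \<Longrightarrow> y \<in> carrier G \<Longrightarrow>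
    elem_aut c p q (x \<otimes>\<^bsub>G\<^esub> y) = elem_aut c p q x \<otimes>\<^bsub>G\<^esub> elem_aut c p q y"
  by (rule hom_mult[OF elem_aut_hom])

lemma elem_aut_apply_inv:
  "c \<in> X \<Longrightarrow> p \<in> dom_span c \<Longrightarrow> q \<in> dom_span c \<Longrightarrow> x \<in> carrier G \<Longrightarrow>
    elem_aut c p q (inv\<^bsub>G\<^esub> x) = inv\<^bsub>G\<^esub> (elem_aut c p q x)"
  using group_hom.hom_inv[of G G "elem_aut c p q" x] elem_aut_hom
  by (simp add: group_hom_def group_hom_axioms_def)

lemma elem_aut_apply_carrier:
  "c \<in> X \<Longrightarrow> p \<in> dom_span c \<Longrightarrow> q \<in> dom_span c \<Longrightarrow> x \<in> carrier G \<Longrightarrow> elem_aut c p q x \<in> carrier G"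
  using AutG_apply_carrier elem_aut_carrier by blast

lemma elem_aut_apply_one:
  "c \<in> X \<Longrightarrow> p \<in> dom_span c \<Longrightarrow> q \<in> dom_span c \<Longrightarrow> elem_aut c p q \<one>\<^bsub>G\<^esub> = \<one>\<^bsub>G\<^esub>"
  using hom_one[OF elem_aut_hom RAAG.group_axioms RAAG.group_axioms] by blast

lemmas elem_aut_apply_simps = elem_aut_gen elem_aut_apply_mult elem_aut_apply_inv elem_aut_apply_carrier

lemma conj_into_K_on_gens:
  assumes "f \<in> carrier AutG" "k \<in> carrier AutG" "F \<in> KK"
    and "\<And>v. v \<in> X \<Longrightarrow> f (k (gen v)) = F (f (gen v))"
  shows "k \<in> conj_into_K f"
proof (rule conj_into_K_intro[OF assms(1-3)])
  have "F \<in> carrier AutG" using K_carrier assms(3) .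
  then show "f \<otimes>\<^bsub>AutG\<^esub> k = F \<otimes>\<^bsub>AutG\<^esub> f"
    using assms by (intro AutG_eq_on_gens) (simp_all add: mult_AutG_apply)
qed

lemma conj_into_K_mult_K:
  assumes "\<kappa> \<in> KK" "f \<in> carrier AutG" "k \<in> conj_into_K f"
  shows "k \<in> conj_into_K (\<kappa> \<otimes>\<^bsub>AutG\<^esub> f)"
proof -
  have kc: "\<kappa> \<in> carrier AutG" "k \<in> carrier AutG" using assms K_carrier
    by (auto simp: conj_into_K_def)
  have "\<kappa> \<otimes>\<^bsub>AutG\<^esub> f \<otimes>\<^bsub>AutG\<^esub> k \<otimes>\<^bsub>AutG\<^esub> inv\<^bsub>AutG\<^esub> (\<kappa> \<otimes>\<^bsub>AutG\<^esub> f) =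
        \<kappa> \<otimes>\<^bsub>AutG\<^esub> (f \<otimes>\<^bsub>AutG\<^esub> k \<otimes>\<^bsub>AutG\<^esub> inv\<^bsub>AutG\<^esub> f) \<otimes>\<^bsub>AutG\<^esub> inv\<^bsub>AutG\<^esub> \<kappa>"
    using kc assms by (simp add: AutG.group_cancel_simps)
  moreover have "f \<otimes>\<^bsub>AutG\<^esub> k \<otimes>\<^bsub>AutG\<^esub> inv\<^bsub>AutG\<^esub> f \<in> KK"
    using assms by (simp add: conj_into_K_def)
  then have "\<kappa> \<otimes>\<^bsub>AutG\<^esub> (f \<otimes>\<^bsub>AutG\<^esub> k \<otimes>\<^bsub>AutG\<^esub> inv\<^bsub>AutG\<^esub> f) \<otimes>\<^bsub>AutG\<^esub> inv\<^bsub>AutG\<^esub> \<kappa> \<in> KK"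
    using assms(1) subgroup.m_closed[OF K_subgroup] subgroup.m_inv_closed[OF K_subgroup] by blast
  ultimately show ?thesis using kc assms by (simp add: conj_into_K_def)
qed

lemma elem_aut_conj_into_K_same_vertex:
  assumes c: "c \<in> Z" and pq0: "p0 \<in> dom_span c" "q0 \<in> dom_span c"
    and pq: "p \<in> dom_span c" "q \<in> dom_span c" "p \<otimes>\<^bsub>G\<^esub> q \<in> derived G (dom_span c)"
  shows "elem_aut c p q \<in> conj_into_K (elem_aut c p0 q0)"
proof (rule conj_into_K_intro)
  show "elem_aut c p0 q0 \<in> carrier AutG" "elem_aut c p q \<in> carrier AutG"
    using Z_vertex[OF c] assms
    by simp_all
  show "elem_aut c (inv\<^bsub>G\<^esub> p0 \<otimes>\<^bsub>G\<^esub> p \<otimes>\<^bsub>G\<^esub> p0) (q0 \<otimes>\<^bsub>G\<^esub> q \<otimes>\<^bsub>G\<^esub> inv\<^bsub>G\<^esub> q0) \<in> KK"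
    using elem_aut_mem_K[OF c] RAAG.conj_mult_mem_derived[OF gen_span_subgroup[OF dom_set_subset]]
      assms
    by simp
  show "elem_aut c p0 q0 \<otimes>\<^bsub>AutG\<^esub> elem_aut c p q =
      elem_aut c (inv\<^bsub>G\<^esub> p0 \<otimes>\<^bsub>G\<^esub> p \<otimes>\<^bsub>G\<^esub> p0) (q0 \<otimes>\<^bsub>G\<^esub> q \<otimes>\<^bsub>G\<^esub> inv\<^bsub>G\<^esub> q0) \<otimes>\<^bsub>AutG\<^esub> elem_aut c p0 q0"
    using assms Z_vertex[OF c] by (simp add: elem_aut_mult RAAG.group_cancel_simps)
qed

text \<open>When neither the vertex \<open>b\<close> nor the letter \<open>a\<close> of a transvection is \<open>c\<close>, conjugating
  \<open>elem_aut c p q\<close> by it just applies it to \<open>p\<close> and \<open>q\<close>.\<close>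
lemma elem_aut_conj_into_K_away:
  assumes bZ: "b \<in> Z" and cZ: "c \<in> Z" and bc: "b \<noteq> c" and a: "a \<in> dom_set b" "a \<noteq> c"
    and pq0: "p0 \<in> gen_span {a}" "q0 \<in> gen_span {a}"
    and pq: "p \<in> dom_span c" "q \<in> dom_span c" "elem_aut b p0 q0 p \<in> dom_span c" "elem_aut b p0 q0 q \<in> dom_span c"
      "elem_aut b p0 q0 p \<otimes>\<^bsub>G\<^esub> elem_aut b p0 q0 q \<in> derived G (dom_span c)"
  shows "elem_aut c p q \<in> conj_into_K (elem_aut b p0 q0)"
proof -
  have X: "b \<in> X" "c \<in> X" "a \<in> X" using bZ cZ a Z_vertex dom_set_vertex by auto
  have pq0_b: "p0 \<in> dom_span b" "q0 \<in> dom_span b"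
    using pq0 a gen_span_mono[of "{a}" "dom_set b"] by auto
  let ?f = "elem_aut b p0 q0" and ?F = "elem_aut c (elem_aut b p0 q0 p) (elem_aut b p0 q0 q)"
  have fix0: "?F p0 = p0" "?F q0 = q0"
    using elem_aut_fixes_gen_span[OF X(2) pq(3,4), of "{a}"] pq0 X a by auto
  show ?thesis
  proof (rule conj_into_K_on_gens)
    show "?f \<in> carrier AutG" "elem_aut c p q \<in> carrier AutG" using X pq0_b pq by simp_all
    show "?F \<in> KK" using elem_aut_mem_K cZ pq by simp
    show "?f (elem_aut c p q (gen v)) = ?F (?f (gen v))" if "v \<in> X" for v
      using that X bc pq0_b pq fix0
      by (cases "v = c"; cases "v = b") (simp_all add: elem_aut_apply_simps)
  qed
qed

lemma elem_aut_gen_dom_span_away: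
  assumes bZ: "b \<in> Z" and c: "c \<in> X" and a: "a \<in> dom_set b" "a \<noteq> c"
    and pq0: "p0 \<in> gen_span {a}" "q0 \<in> gen_span {a}" and d: "d \<in> dom_set c"
  shows "elem_aut b p0 q0 (gen d) \<in> dom_span c"
proof -
  have X: "b \<in> X" "d \<in> X" using bZ Z_vertex dom_set_vertex d by auto
  have pq0_b: "p0 \<in> dom_span b" "q0 \<in> dom_span b"
    using pq0 a gen_span_mono[of "{a}" "dom_set b"] by auto
  show ?thesis
  proof (cases "d = b")
    case True
    then have "a \<in> dom_set c" using a d dominates_trans by (auto simp: mem_dom_set_iff)
    then have "p0 \<in> dom_span c" "q0 \<in> dom_span c" using pq0 gen_span_mono[of "{a}" "dom_set c"]
      by auto
    then show ?thesis using True X pq0_b d gen_in_gen_span by (simp add: elem_aut_gen)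
  next
    case False
    then show ?thesis using X pq0_b d gen_in_gen_span by (simp add: elem_aut_gen)
  qed
qed

lemma basic_auts_conj_into_K_away:
  assumes bZ: "b \<in> Z" and cZ: "c \<in> Z" and bc: "b \<noteq> c" and a: "a \<in> dom_set b" "a \<noteq> c"
    and pq0: "p0 \<in> gen_span {a}" "q0 \<in> gen_span {a}"
  shows "basic_auts c \<subseteq> conj_into_K (elem_aut b p0 q0)"
proof -
  have X: "b \<in> X" "c \<in> X" using bZ cZ Z_vertex by auto
  have pq0_b: "p0 \<in> dom_span b" "q0 \<in> dom_span b"
    using pq0 a gen_span_mono[of "{a}" "dom_set b"] by auto
  have img: "elem_aut b p0 q0 (gen d) \<in> dom_span c" if "d \<in> dom_set c" for d
    using elem_aut_gen_dom_span_away[OF bZ X(2) a pq0 that] .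
  have pconj: "elem_aut c (inv\<^bsub>G\<^esub> gen d) (gen d) \<in> conj_into_K (elem_aut b p0 q0)"
    if d: "d \<in> dom_set c" for d
    using img[OF d] gen_in_gen_span[of d "dom_set c"] d X pq0_b dom_set_vertex
    by (intro elem_aut_conj_into_K_away[OF bZ cZ bc a pq0]) (simp_all add: elem_aut_apply_inv)
  have comm: "elem_aut c \<one>\<^bsub>G\<^esub> (commutator G (gen d\<^sub>1) (gen d\<^sub>2)) \<in> conj_into_K (elem_aut b p0 q0)"
    if d: "d\<^sub>1 \<in> dom_set c" "d\<^sub>2 \<in> dom_set c" for d\<^sub>1 d\<^sub>2
  proof (rule elem_aut_conj_into_K_away[OF bZ cZ bc a pq0])
    have "elem_aut b p0 q0 (commutator G (gen d\<^sub>1) (gen d\<^sub>2))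
        = commutator G (elem_aut b p0 q0 (gen d\<^sub>1)) (elem_aut b p0 q0 (gen d\<^sub>2))"
      using X pq0_b d dom_set_vertex by (simp add: commutator_def elem_aut_apply_simps)
    then show "elem_aut b p0 q0 (commutator G (gen d\<^sub>1) (gen d\<^sub>2)) \<in> dom_span c"
      "elem_aut b p0 q0 \<one>\<^bsub>G\<^esub> \<otimes>\<^bsub>G\<^esub> elem_aut b p0 q0 (commutator G (gen d\<^sub>1) (gen d\<^sub>2)) \<in> derived G (dom_span c)"
      using img d X pq0_b by (simp_all add: elem_aut_apply_one)
  qed (use d X pq0_b gen_in_gen_span[of _ "dom_set c"] in \<open>simp_all add: elem_aut_apply_one\<close>)
  show ?thesis using pconj comm by (auto simp: basic_auts_def)
qed

lemma gen_span_dom_set_minus_subset: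
  assumes "c \<in> dom_set b" shows "gen_span (dom_set c - {b}) \<subseteq> dom_span b"
proof (rule gen_span_mono, rule subsetI)
  fix d assume "d \<in> dom_set c - {b}"
  then show "d \<in> dom_set b" using assms dominates_trans by (auto simp: mem_dom_set_iff)
qed

lemma transvection_by_correction_mem_derived:
  assumes c: "c \<in> X" and cb: "c \<in> dom_set b" and g: "g = gen c \<or> g = inv\<^bsub>G\<^esub> gen c"
    and pq: "p \<in> gen_span (dom_set c - {b})" "q \<in> gen_span (dom_set c - {b})"
      "p \<otimes>\<^bsub>G\<^esub> q \<in> derived G (dom_span b)"
  shows "g \<otimes>\<^bsub>G\<^esub> inv\<^bsub>G\<^esub> (elem_aut c p q g) \<in> derived G (dom_span b)"
proof -
  have pqc: "p \<in> dom_span c" "q \<in> dom_span c"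
    using pq gen_span_mono[of "dom_set c - {b}" "dom_set c"] by auto
  have pqb: "p \<in> dom_span b" "q \<in> dom_span b" using pq gen_span_dom_set_minus_subset[OF cb]
    by auto
  have Cb: "gen c \<in> dom_span b" using cb gen_in_gen_span by simp
  from g show ?thesis
  proof
    assume "g = gen c"
    then have
      "g \<otimes>\<^bsub>G\<^esub> inv\<^bsub>G\<^esub> (elem_aut c p q g) = commutator G (inv\<^bsub>G\<^esub> gen c) q \<otimes>\<^bsub>G\<^esub> inv\<^bsub>G\<^esub> (p \<otimes>\<^bsub>G\<^esub> q)"
      using c pqc by (simp add: elem_aut_gen commutator_def RAAG.group_cancel_simps)
    then show ?thesis using pq pqb Cb by simp
  next
    assume "g = inv\<^bsub>G\<^esub> gen c"
    then have "g \<otimes>\<^bsub>G\<^esub> inv\<^bsub>G\<^esub> (elem_aut c p q g) = commutator G (gen c) (inv\<^bsub>G\<^esub> p) \<otimes>\<^bsub>G\<^esub> (p \<otimes>\<^bsub>G\<^esub> q)"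
      using c pqc by (simp add: elem_aut_apply_simps commutator_def RAAG.group_cancel_simps)
    then show ?thesis using pq pqb Cb by simp
  qed
qed

text \<open>Conjugating by the transvection \<open>f: b \<mapsto> b g\<close>, \<open>g = c\<^sup>\<plusminus>\<^sup>1\<close>, turns \<open>k = elem_aut c p q\<close>
  into \<open>F k\<close>, where \<open>F\<close> multiplies \<open>b\<close> by \<open>g k(g)\<inverse>\<close>.\<close>
lemma elem_aut_conj_into_K_transvection_by:
  assumes bZ: "b \<in> Z" and cZ: "c \<in> Z" and bc: "b \<noteq> c" and cb: "c \<in> dom_set b"
    and g: "g = gen c \<or> g = inv\<^bsub>G\<^esub> gen c"
    and pq: "p \<in> gen_span (dom_set c - {b})" "q \<in> gen_span (dom_set c - {b})"
      "p \<otimes>\<^bsub>G\<^esub> q \<in> derived G (dom_span b)" "p \<otimes>\<^bsub>G\<^esub> q \<in> derived G (dom_span c)"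
  shows "elem_aut c p q \<in> conj_into_K (elem_aut b \<one>\<^bsub>G\<^esub> g)"
proof -
  have X: "b \<in> X" "c \<in> X" using bZ cZ Z_vertex by auto
  have D'X: "dom_set c - {b} \<subseteq> X" using dom_set_subset by auto
  have pqc: "p \<in> dom_span c" "q \<in> dom_span c"
    using pq gen_span_mono[of "dom_set c - {b}" "dom_set c"] by auto
  have pqb: "p \<in> dom_span b" "q \<in> dom_span b" using pq gen_span_dom_set_minus_subset[OF cb]
    by auto
  have gb: "g \<in> dom_span b" using g cb gen_in_gen_span by auto
  define kg where "kg = elem_aut c p q g"
  have kg: "kg = p \<otimes>\<^bsub>G\<^esub> gen c \<otimes>\<^bsub>G\<^esub> q \<or> kg = inv\<^bsub>G\<^esub> (p \<otimes>\<^bsub>G\<^esub> gen c \<otimes>\<^bsub>G\<^esub> q)"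
    using g X pqc by (auto simp: kg_def elem_aut_gen elem_aut_apply_inv)
  have kgb: "kg \<in> dom_span b" using kg pqb cb gen_in_gen_span by auto
  define A' where "A' = insert c (dom_set c - {b})"
  have A'X: "A' \<subseteq> X" "b \<notin> A'" using D'X X bc by (auto simp: A'_def)
  have kgA: "kg \<in> gen_span A'"
  proof -
    have "p \<in> gen_span A'" "q \<in> gen_span A'" "gen c \<in> gen_span A'"
      using pq gen_span_mono[of "dom_set c - {b}" A'] gen_in_gen_span[of c A']
        by (auto simp: A'_def)
    then show ?thesis using kg A'X by auto
  qed
  let ?f = "elem_aut b \<one>\<^bsub>G\<^esub> g" and ?k = "elem_aut c p q"
    and ?F = "elem_aut b \<one>\<^bsub>G\<^esub> (g \<otimes>\<^bsub>G\<^esub> inv\<^bsub>G\<^esub> kg)"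
  have gi: "g \<otimes>\<^bsub>G\<^esub> inv\<^bsub>G\<^esub> kg \<in> dom_span b" using gb kgb by simp
  have cars: "?f \<in> carrier AutG" "?k \<in> carrier AutG" "?F \<in> carrier AutG" using X gb pqc gi
    by simp_all
  have fixed: "?f p = p" "?f q = q" "?F p = p" "?F q = q" "?F kg = kg"
    using elem_aut_fixes_gen_span[OF X(1) _ _ D'X, of _ _ p]
      elem_aut_fixes_gen_span[OF X(1) _ _ D'X, of _ _ q]
      elem_aut_fixes_gen_span[OF X(1) _ _ A'X(1) A'X(2) kgA] pq gb gi
    by auto
  show ?thesis
  proof (rule conj_into_K_on_gens[OF cars(1,2)])
    show "?F \<otimes>\<^bsub>AutG\<^esub> ?k \<in> KK"
      using elem_aut_mem_K[OF bZ _ gi] transvection_by_correction_mem_derived[OF X(2) cb g pq(1-3)]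
        elem_aut_mem_K[OF cZ pqc pq(4)] subgroup.m_closed[OF K_subgroup]
      by (simp add: kg_def)
    show "?f (?k (gen v)) = (?F \<otimes>\<^bsub>AutG\<^esub> ?k) (?f (gen v))" if "v \<in> X" for v
      using that X bc gb pqc gi fixed kgb cars
      by (cases "v = c"; cases "v = b")
        (simp_all add: mult_AutG_apply elem_aut_apply_simps elem_aut_apply_one kg_def[symmetric]
          RAAG.group_cancel_simps)
  qed
qed

text \<open>The remaining cases have \<open>b\<close> and \<open>c\<close> dominating each other; the factors \<open>F\<close> with
  \<open>f k f\<inverse> = F\<close> are found by evaluating both sides at \<open>b\<close> and \<open>c\<close>.\<close>
lemma pconj_conj_into_K_mutual:
  assumes bZ: "b \<in> Z" and cZ: "c \<in> Z" and bc: "b \<noteq> c" and cb: "c \<in> dom_set b" and bc': "b \<in> dom_set c"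
    and g: "g = gen c \<or> g = inv\<^bsub>G\<^esub> gen c"
  shows "elem_aut c (inv\<^bsub>G\<^esub> gen b) (gen b) \<in> conj_into_K (elem_aut b \<one>\<^bsub>G\<^esub> g)"
proof -
  have X: "b \<in> X" "c \<in> X" using bZ cZ Z_vertex by auto
  have Cb: "gen c \<in> dom_span b" and Bc: "gen b \<in> dom_span c" using cb bc' gen_in_gen_span
    by simp_all
  have gb: "g \<in> dom_span b" using g Cb by auto
  have g_carrier: "g \<in> carrier G" using gb by simp
  let ?f = "elem_aut b \<one>\<^bsub>G\<^esub> g" and ?k = "elem_aut c (inv\<^bsub>G\<^esub> gen b) (gen b)"
    and ?F = "elem_aut b (inv\<^bsub>G\<^esub> g) g"
  have cars: "?f \<in> carrier AutG" "?k \<in> carrier AutG" "?F \<in> carrier AutG"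
    using X gb Bc by simp_all
  have kg: "?k g = inv\<^bsub>G\<^esub> gen b \<otimes>\<^bsub>G\<^esub> (g \<otimes>\<^bsub>G\<^esub> gen b)"
    using g X Bc by (elim disjE) (simp_all add: elem_aut_apply_simps RAAG.group_cancel_simps)
  have Fg: "?F g = g" using elem_aut_fixes_dom_span X gb by simp
  have gC: "g \<otimes>\<^bsub>G\<^esub> (gen c \<otimes>\<^bsub>G\<^esub> (inv\<^bsub>G\<^esub> g \<otimes>\<^bsub>G\<^esub> x)) = gen c \<otimes>\<^bsub>G\<^esub> x" if "x \<in> carrier G" for x
    using g X that by (elim disjE) (simp_all add: RAAG.group_cancel_simps)
  show ?thesis
  proof (rule conj_into_K_on_gens[OF cars(1,2)])
    show "?F \<otimes>\<^bsub>AutG\<^esub> ?k \<in> KK"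
      using elem_aut_mem_K[OF bZ, of "inv\<^bsub>G\<^esub> g" g]
        elem_aut_mem_K[OF cZ, of "inv\<^bsub>G\<^esub> gen b" "gen b"] gb Bc
        subgroup.m_closed[OF K_subgroup] by simp
    show "?f (?k (gen v)) = (?F \<otimes>\<^bsub>AutG\<^esub> ?k) (?f (gen v))" if "v \<in> X" for v
      using that X bc gb Bc cars g_carrier kg Fg
      by (cases "v = c"; cases "v = b")
        (simp_all add: mult_AutG_apply elem_aut_apply_simps gC RAAG.group_cancel_simps)
  qed
qed

lemma comm_transvection_conj_into_K_mutual_pos:
  assumes bZ: "b \<in> Z" and cZ: "c \<in> Z" and bc: "b \<noteq> c" and cb: "c \<in> dom_set b" and bc': "b \<in> dom_set c"
    and y: "y \<in> dom_set c" "y \<noteq> b"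
  shows "elem_aut c \<one>\<^bsub>G\<^esub> (commutator G (gen b) (gen y)) \<in> conj_into_K (elem_aut b \<one>\<^bsub>G\<^esub> (gen c))"
proof -
  have X: "b \<in> X" "c \<in> X" "y \<in> X" using bZ cZ Z_vertex dom_set_vertex y by auto
  have yc: "y \<noteq> c" using y by (auto simp: mem_dom_set_iff)
  have yb: "y \<in> dom_set b" using y cb dominates_trans by (auto simp: mem_dom_set_iff)
  have spans: "gen c \<in> dom_span b" "gen b \<in> dom_span c" "gen y \<in> dom_span c" "gen y \<in> dom_span b"
    using cb bc' y yb gen_in_gen_span by simp_all
  let ?B = "gen b" and ?C = "gen c" and ?Y = "gen y"
  let ?f = "elem_aut b \<one>\<^bsub>G\<^esub> ?C" and ?k = "elem_aut c \<one>\<^bsub>G\<^esub> (commutator G ?B ?Y)"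
    and ?F1 = "elem_aut c (inv\<^bsub>G\<^esub> ?B \<otimes>\<^bsub>G\<^esub> inv\<^bsub>G\<^esub> ?Y \<otimes>\<^bsub>G\<^esub> ?B) ?Y"
    and ?F2 = "elem_aut b ?Y (?C \<otimes>\<^bsub>G\<^esub> inv\<^bsub>G\<^esub> ?Y \<otimes>\<^bsub>G\<^esub> inv\<^bsub>G\<^esub> ?C)"
  have w: "inv\<^bsub>G\<^esub> ?B \<otimes>\<^bsub>G\<^esub> inv\<^bsub>G\<^esub> ?Y \<otimes>\<^bsub>G\<^esub> ?B \<in> dom_span c"
    "?C \<otimes>\<^bsub>G\<^esub> inv\<^bsub>G\<^esub> ?Y \<otimes>\<^bsub>G\<^esub> inv\<^bsub>G\<^esub> ?C \<in> dom_span b" "commutator G ?B ?Y \<in> dom_span c"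
    using spans by simp_all
  have cars: "?f \<in> carrier AutG" "?k \<in> carrier AutG" "?F1 \<in> carrier AutG" "?F2 \<in> carrier AutG"
    using X spans w by simp_all
  have "?F1 \<in> KK"
  proof -
    have "(inv\<^bsub>G\<^esub> ?B \<otimes>\<^bsub>G\<^esub> inv\<^bsub>G\<^esub> ?Y \<otimes>\<^bsub>G\<^esub> ?B) \<otimes>\<^bsub>G\<^esub> ?Y = commutator G ?B ?Y"
      using X by (simp add: commutator_def RAAG.group_cancel_simps)
    then show ?thesis using elem_aut_mem_K[OF cZ w(1) spans(3)] spans by simp
  qed
  moreover have "?F2 \<in> KK"
  proof -
    have "?Y \<otimes>\<^bsub>G\<^esub> (?C \<otimes>\<^bsub>G\<^esub> inv\<^bsub>G\<^esub> ?Y \<otimes>\<^bsub>G\<^esub> inv\<^bsub>G\<^esub> ?C) = commutator G (inv\<^bsub>G\<^esub> ?Y) (inv\<^bsub>G\<^esub> ?C)"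
      using X by (simp add: commutator_def RAAG.group_cancel_simps)
    then show ?thesis using elem_aut_mem_K[OF bZ spans(4) w(2)] spans by simp
  qed
  ultimately have FK: "?F1 \<otimes>\<^bsub>AutG\<^esub> ?F2 \<in> KK"
    using subgroup.m_closed[OF K_subgroup] by blast
  show ?thesis
  proof (rule conj_into_K_on_gens[OF cars(1,2) FK])
    show "?f (?k (gen v)) = (?F1 \<otimes>\<^bsub>AutG\<^esub> ?F2) (?f (gen v))" if "v \<in> X" for v
      using that X bc yc y spans w cars
      by (cases "v = c"; cases "v = b")
        (simp_all add: mult_AutG_apply elem_aut_apply_simps commutator_def RAAG.group_cancel_simps)
  qed
qed

lemma comm_transvection_conj_into_K_mutual_neg:
  assumes bZ: "b \<in> Z" and cZ: "c \<in> Z" and bc: "b \<noteq> c" and cb: "c \<in> dom_set b" and bc': "b \<in> dom_set c"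
    and y: "y \<in> dom_set c" "y \<noteq> b"
  shows "elem_aut c (commutator G (gen y) (gen b)) \<one>\<^bsub>G\<^esub> \<in> conj_into_K (elem_aut b \<one>\<^bsub>G\<^esub> (inv\<^bsub>G\<^esub> gen c))"
proof -
  have X: "b \<in> X" "c \<in> X" "y \<in> X" using bZ cZ Z_vertex dom_set_vertex y by auto
  have yc: "y \<noteq> c" using y by (auto simp: mem_dom_set_iff)
  have yb: "y \<in> dom_set b" using y cb dominates_trans by (auto simp: mem_dom_set_iff)
  have spans: "gen c \<in> dom_span b" "gen b \<in> dom_span c" "gen y \<in> dom_span c" "gen y \<in> dom_span b"
    using cb bc' y yb gen_in_gen_span by simp_all
  let ?B = "gen b" and ?C = "gen c" and ?Y = "gen y"
  let ?f = "elem_aut b \<one>\<^bsub>G\<^esub> (inv\<^bsub>G\<^esub> ?C)" and ?k = "elem_aut c (commutator G ?Y ?B) \<one>\<^bsub>G\<^esub>"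
    and ?F1 = "elem_aut c (inv\<^bsub>G\<^esub> ?Y) (inv\<^bsub>G\<^esub> ?B \<otimes>\<^bsub>G\<^esub> ?Y \<otimes>\<^bsub>G\<^esub> ?B)"
    and ?F2 = "elem_aut b ?Y (inv\<^bsub>G\<^esub> ?C \<otimes>\<^bsub>G\<^esub> inv\<^bsub>G\<^esub> ?Y \<otimes>\<^bsub>G\<^esub> ?C)"
  have w: "inv\<^bsub>G\<^esub> ?B \<otimes>\<^bsub>G\<^esub> ?Y \<otimes>\<^bsub>G\<^esub> ?B \<in> dom_span c"
    "inv\<^bsub>G\<^esub> ?C \<otimes>\<^bsub>G\<^esub> inv\<^bsub>G\<^esub> ?Y \<otimes>\<^bsub>G\<^esub> ?C \<in> dom_span b" "commutator G ?Y ?B \<in> dom_span c"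
    using spans by simp_all
  have cars: "?f \<in> carrier AutG" "?k \<in> carrier AutG" "?F1 \<in> carrier AutG" "?F2 \<in> carrier AutG"
    using X spans w by simp_all
  have "?F1 \<in> KK"
  proof -
    have "inv\<^bsub>G\<^esub> ?Y \<otimes>\<^bsub>G\<^esub> (inv\<^bsub>G\<^esub> ?B \<otimes>\<^bsub>G\<^esub> ?Y \<otimes>\<^bsub>G\<^esub> ?B) = commutator G ?Y ?B"
      using X by (simp add: commutator_def RAAG.group_cancel_simps)
    then show ?thesis using elem_aut_mem_K[OF cZ _ w(1)] spans by simp
  qed
  moreover have "?F2 \<in> KK"
  proof -
    have "?Y \<otimes>\<^bsub>G\<^esub> (inv\<^bsub>G\<^esub> ?C \<otimes>\<^bsub>G\<^esub> inv\<^bsub>G\<^esub> ?Y \<otimes>\<^bsub>G\<^esub> ?C) = commutator G (inv\<^bsub>G\<^esub> ?Y) ?C"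
      using X by (simp add: commutator_def RAAG.group_cancel_simps)
    then show ?thesis using elem_aut_mem_K[OF bZ spans(4) w(2)] spans by simp
  qed
  ultimately have FK: "?F1 \<otimes>\<^bsub>AutG\<^esub> ?F2 \<in> KK"
    using subgroup.m_closed[OF K_subgroup] by blast
  show ?thesis
  proof (rule conj_into_K_on_gens[OF cars(1,2) FK])
    show "?f (?k (gen v)) = (?F1 \<otimes>\<^bsub>AutG\<^esub> ?F2) (?f (gen v))" if "v \<in> X" for v
      using that X bc yc y spans w cars
      by (cases "v = c"; cases "v = b")
        (simp_all add: mult_AutG_apply elem_aut_apply_simps commutator_def RAAG.group_cancel_simps)
  qed
qed

lemma comm_transvection_conj_into_K_mutual:
  assumes bZ: "b \<in> Z" and cZ: "c \<in> Z" and bc: "b \<noteq> c" and cb: "c \<in> dom_set b" and bc': "b \<in> dom_set c"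
    and g: "g = gen c \<or> g = inv\<^bsub>G\<^esub> gen c" and y: "y \<in> dom_set c" "y \<noteq> b"
    and pconj: "\<And>d. d \<in> dom_set c \<Longrightarrow> elem_aut c (inv\<^bsub>G\<^esub> gen d) (gen d) \<in> conj_into_K (elem_aut b \<one>\<^bsub>G\<^esub> g)"
  shows "elem_aut c \<one>\<^bsub>G\<^esub> (commutator G (gen b) (gen y)) \<in> conj_into_K (elem_aut b \<one>\<^bsub>G\<^esub> g)"
  using g
proof
  assume "g = gen c"
  then show ?thesis using comm_transvection_conj_into_K_mutual_pos[OF bZ cZ bc cb bc' y] by simp
next
  assume g: "g = inv\<^bsub>G\<^esub> gen c"
  have X: "c \<in> X" using cZ Z_vertex by auto
  have gb: "g \<in> dom_span b" using g cb gen_in_gen_span by simp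
  have T: "subgroup (conj_into_K (elem_aut b \<one>\<^bsub>G\<^esub> g)) AutG"
    using conj_into_K_subgroup Z_vertex[OF bZ] gb by simp
  define h where "h = commutator G (gen y) (gen b)"
  have hw: "h \<in> dom_span c" using bc' y gen_in_gen_span by (simp add: h_def)
  have "elem_aut c h \<one>\<^bsub>G\<^esub> \<in> conj_into_K (elem_aut b \<one>\<^bsub>G\<^esub> g)"
    using comm_transvection_conj_into_K_mutual_neg[OF bZ cZ bc cb bc' y] g by (simp add: h_def)
  moreover have "elem_aut c h (inv\<^bsub>G\<^esub> h) \<in> conj_into_K (elem_aut b \<one>\<^bsub>G\<^esub> g)"
    using elem_aut_conj_pair_mem[OF T X pconj dom_span_inv[OF hw]] hw by simp
  moreover have "elem_aut c \<one>\<^bsub>G\<^esub> h = inv\<^bsub>AutG\<^esub> (elem_aut c h (inv\<^bsub>G\<^esub> h)) \<otimes>\<^bsub>AutG\<^esub> elem_aut c h \<one>\<^bsub>G\<^esub>"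
    using hw X elem_aut_AutG(2)[OF X] elem_aut_mult[OF X] by simp
  ultimately have "elem_aut c \<one>\<^bsub>G\<^esub> h \<in> conj_into_K (elem_aut b \<one>\<^bsub>G\<^esub> g)"
    using subgroup.m_closed[OF T] subgroup.m_inv_closed[OF T] by simp
  moreover have "inv\<^bsub>AutG\<^esub> (elem_aut c \<one>\<^bsub>G\<^esub> h) = elem_aut c \<one>\<^bsub>G\<^esub> (inv\<^bsub>G\<^esub> h)"
    using hw elem_aut_AutG(2)[OF X] by simp
  ultimately have "elem_aut c \<one>\<^bsub>G\<^esub> (inv\<^bsub>G\<^esub> h) \<in> conj_into_K (elem_aut b \<one>\<^bsub>G\<^esub> g)"
    using subgroup.m_inv_closed[OF T] by metis
  then show ?thesis using y bc' X dom_set_vertex by (simp add: h_def RAAG.inv_commutator)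
qed

lemma pconj_conj_into_K_transvection_by:
  assumes bZ: "b \<in> Z" and cZ: "c \<in> Z" and bc: "b \<noteq> c" and cb: "c \<in> dom_set b"
    and g: "g = gen c \<or> g = inv\<^bsub>G\<^esub> gen c" and d: "d \<in> dom_set c"
  shows "elem_aut c (inv\<^bsub>G\<^esub> gen d) (gen d) \<in> conj_into_K (elem_aut b \<one>\<^bsub>G\<^esub> g)"
proof (cases "d = b")
  case True
  then show ?thesis using pconj_conj_into_K_mutual[OF bZ cZ bc cb _ g] d by simp
next
  case False
  have "dom_set c - {b} \<subseteq> X" using dom_set_subset by auto
  moreover have "gen d \<in> gen_span (dom_set c - {b})" "gen d \<in> dom_span b"
    using d False cb dominates_trans gen_in_gen_span by (auto simp: mem_dom_set_iff)
  ultimately show ?thesis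
    using elem_aut_conj_into_K_transvection_by[OF bZ cZ bc cb g, of "inv\<^bsub>G\<^esub> gen d" "gen d"]
      d dom_set_vertex by simp
qed

lemma comm_transvection_conj_into_K_transvection_by:
  assumes bZ: "b \<in> Z" and cZ: "c \<in> Z" and bc: "b \<noteq> c" and cb: "c \<in> dom_set b"
    and g: "g = gen c \<or> g = inv\<^bsub>G\<^esub> gen c" and d: "d\<^sub>1 \<in> dom_set c" "d\<^sub>2 \<in> dom_set c"
  shows "elem_aut c \<one>\<^bsub>G\<^esub> (commutator G (gen d\<^sub>1) (gen d\<^sub>2)) \<in> conj_into_K (elem_aut b \<one>\<^bsub>G\<^esub> g)"
proof -
  have X: "b \<in> X" "c \<in> X" using bZ cZ Z_vertex by auto
  have T: "subgroup (conj_into_K (elem_aut b \<one>\<^bsub>G\<^esub> g)) AutG"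
    using conj_into_K_subgroup X g cb gen_in_gen_span by auto
  have carr: "gen d\<^sub>1 \<in> carrier G" "gen d\<^sub>2 \<in> carrier G" using d dom_set_vertex by auto
  have mutual: "elem_aut c \<one>\<^bsub>G\<^esub> (commutator G (gen b) (gen y)) \<in> conj_into_K (elem_aut b \<one>\<^bsub>G\<^esub> g)"
    if "y \<in> dom_set c" "y \<noteq> b" "b \<in> dom_set c" for y
    using comm_transvection_conj_into_K_mutual[OF bZ cZ bc cb _ g _ _ pconj_conj_into_K_transvection_by[OF bZ cZ bc cb g]]
      that by blast
  consider "d\<^sub>1 = b" "d\<^sub>2 = b" | "d\<^sub>1 = b" "d\<^sub>2 \<noteq> b" | "d\<^sub>1 \<noteq> b" "d\<^sub>2 = b" | "d\<^sub>1 \<noteq> b" "d\<^sub>2 \<noteq> b"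
    by blast
  then show ?thesis
  proof cases
    case 1
    then show ?thesis using elem_aut_one[OF X(2)] subgroup.one_closed[OF T] carr by simp
  next
    case 2
    then show ?thesis using mutual d by simp
  next
    case 3
    have "inv\<^bsub>AutG\<^esub> (elem_aut c \<one>\<^bsub>G\<^esub> (commutator G (gen b) (gen d\<^sub>1)))
        = elem_aut c \<one>\<^bsub>G\<^esub> (commutator G (gen d\<^sub>1) (gen d\<^sub>2))"
      using elem_aut_AutG(2)[OF X(2)] 3 d carr gen_in_gen_span[of _ "dom_set c"]
      by (simp add: RAAG.inv_commutator)
    then show ?thesis using subgroup.m_inv_closed[OF T mutual[of d\<^sub>1]] 3 d by simp
  next
    case 4
    have away: "gen d\<^sub>1 \<in> gen_span (dom_set c - {b})" "gen d\<^sub>2 \<in> gen_span (dom_set c - {b})"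
      "gen d\<^sub>1 \<in> dom_span b" "gen d\<^sub>2 \<in> dom_span b"
      using d 4 cb dominates_trans gen_in_gen_span by (auto simp: mem_dom_set_iff)
    moreover have "dom_set c - {b} \<subseteq> X" using dom_set_subset by auto
    ultimately have "commutator G (gen d\<^sub>1) (gen d\<^sub>2) \<in> gen_span (dom_set c - {b})"
      by (simp add: commutator_def)
    then show ?thesis
      using elem_aut_conj_into_K_transvection_by[OF bZ cZ bc cb g, of "\<one>\<^bsub>G\<^esub>"] away d carr
        gen_in_gen_span[of _ "dom_set c"] by simp
  qed
qed

lemma basic_auts_conj_into_K_transvection_by:
  assumes "b \<in> Z" "c \<in> Z" "b \<noteq> c" "c \<in> dom_set b" "g = gen c \<or> g = inv\<^bsub>G\<^esub> gen c"
  shows "basic_auts c \<subseteq> conj_into_K (elem_aut b \<one>\<^bsub>G\<^esub> g)"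
  using pconj_conj_into_K_transvection_by[OF assms]
    comm_transvection_conj_into_K_transvection_by[OF assms]
  by (auto simp: basic_auts_def)

lemma basic_auts_conj_into_K_transvection_by_inv:
  assumes bZ: "b \<in> Z" and cZ: "c \<in> Z" and bc: "b \<noteq> c" and cb: "c \<in> dom_set b"
    and g: "g = gen c \<or> g = inv\<^bsub>G\<^esub> gen c"
  shows "basic_auts c \<subseteq> conj_into_K (elem_aut b (inv\<^bsub>G\<^esub> g) \<one>\<^bsub>G\<^esub>)"
proof -
  have X: "b \<in> X" "c \<in> X" using bZ cZ Z_vertex by auto
  have gb: "g \<in> dom_span b" using g cb gen_in_gen_span by auto
  have split:
    "elem_aut b (inv\<^bsub>G\<^esub> g) \<one>\<^bsub>G\<^esub> = elem_aut b (inv\<^bsub>G\<^esub> g) g \<otimes>\<^bsub>AutG\<^esub> elem_aut b \<one>\<^bsub>G\<^esub> (inv\<^bsub>G\<^esub> g)"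
    using elem_aut_mult[OF X(1)] gb by simp
  have \<kappa>: "elem_aut b (inv\<^bsub>G\<^esub> g) g \<in> KK" using elem_aut_mem_K[OF bZ] gb by simp
  have "inv\<^bsub>G\<^esub> g = gen c \<or> inv\<^bsub>G\<^esub> g = inv\<^bsub>G\<^esub> gen c"
    using g X(2) by (elim disjE) simp_all
  then have "basic_auts c \<subseteq> conj_into_K (elem_aut b \<one>\<^bsub>G\<^esub> (inv\<^bsub>G\<^esub> g))"
    by (rule basic_auts_conj_into_K_transvection_by[OF bZ cZ bc cb])
  then show ?thesis
    using conj_into_K_mult_K[OF \<kappa> elem_aut_carrier[OF X(1) gen_span_one dom_span_inv[OF gb]]]
    unfolding split by blast
qed

lemma basic_auts_cases:
  assumes "k \<in> basic_auts c"
  obtains p q where "p \<in> dom_span c" "q \<in> dom_span c" "p \<otimes>\<^bsub>G\<^esub> q \<in> derived G (dom_span c)"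
    "k = elem_aut c p q"
proof -
  have gens: "gen d \<in> dom_span c" if "d \<in> dom_set c" for d using that gen_in_gen_span by simp
  from assms consider d where "d \<in> dom_set c" "k = elem_aut c (inv\<^bsub>G\<^esub> gen d) (gen d)"
    | d\<^sub>1 d\<^sub>2 where "d\<^sub>1 \<in> dom_set c" "d\<^sub>2 \<in> dom_set c" "k = elem_aut c \<one>\<^bsub>G\<^esub> (commutator G (gen d\<^sub>1) (gen d\<^sub>2))"
    unfolding basic_auts_def by blast
  then show ?thesis
  proof cases
    case 1
    then show ?thesis using that[of "inv\<^bsub>G\<^esub> gen d" "gen d"] gens[OF 1(1)] by simp
  next
    case 2
    then show ?thesis
      using that[of "\<one>\<^bsub>G\<^esub>" "commutator G (gen d\<^sub>1) (gen d\<^sub>2)"] gens by simp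
  qed
qed

lemma basic_auts_conj_into_K_transvection:
  assumes bZ: "fst b \<in> Z" and a: "fst a \<in> dom_set (fst b)" and cZ: "c \<in> Z"
  shows "basic_auts c \<subseteq> conj_into_K (transvection X E a b)"
proof -
  define g where "g = letter_elt a"
  define p0 where "p0 = (if snd b then inv\<^bsub>G\<^esub> g else \<one>\<^bsub>G\<^esub>)"
  define q0 where "q0 = (if snd b then \<one>\<^bsub>G\<^esub> else g)"
  have X: "fst b \<in> X" "fst a \<in> X" using bZ a Z_vertex dom_set_vertex by auto
  have g_a: "g \<in> gen_span {fst a}" using gen_in_gen_span[of "fst a" "{fst a}"] X
    by (auto simp: g_def letter_elt_def)
  have g_b: "g \<in> dom_span (fst b)" using g_a a gen_span_mono[of "{fst a}" "dom_set (fst b)"]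
    by auto
  have pq0: "p0 \<in> gen_span {fst a}" "q0 \<in> gen_span {fst a}" using g_a X
    by (auto simp: p0_def q0_def)
  have pq0_b: "p0 \<in> dom_span (fst b)" "q0 \<in> dom_span (fst b)" using g_b
    by (auto simp: p0_def q0_def)
  have tr: "transvection X E a b = elem_aut (fst b) p0 q0"
    using transvection_eq_elem_aut[OF bZ a] by (simp add: p0_def q0_def g_def)
  consider "c = fst b" | "c \<noteq> fst b" "fst a \<noteq> c" | "c \<noteq> fst b" "fst a = c" by blast
  then show ?thesis
  proof cases
    case 1
    show ?thesis
    proof
      fix k assume "k \<in> basic_auts c"
      then obtain p q where "p \<in> dom_span c" "q \<in> dom_span c" "p \<otimes>\<^bsub>G\<^esub> q \<in> derived G (dom_span c)"
        "k = elem_aut c p q" by (rule basic_auts_cases)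
      then show "k \<in> conj_into_K (transvection X E a b)"
        using elem_aut_conj_into_K_same_vertex[OF cZ, of p0 q0] pq0_b 1 tr by simp
    qed
  next
    case 2
    then show ?thesis using basic_auts_conj_into_K_away[OF bZ cZ _ a _ pq0] tr by auto
  next
    case 3
    have cb: "c \<in> dom_set (fst b)" using a 3 by simp
    have gc: "g = gen c \<or> g = inv\<^bsub>G\<^esub> gen c" using 3 by (auto simp: g_def letter_elt_def)
    show ?thesis
      using basic_auts_conj_into_K_transvection_by[OF bZ cZ _ cb gc]
        basic_auts_conj_into_K_transvection_by_inv[OF bZ cZ _ cb gc] 3 tr
      by (cases "snd b") (auto simp: p0_def q0_def)
  qed
qed

lemma G_gens_cases:
  assumes "f \<in> G_gens X E Z"
  obtains g where "g \<in> carrier G" "f = inner g"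
    | a b where "fst b \<in> Z" "fst a \<in> dom_set (fst b)" "f = transvection X E a b"
  using assms unfolding G_gens_def inner_auts_eq_image
    by (auto simp: mem_letters_iff mem_dom_set_iff)

lemma transvection_carrier:
  "fst b \<in> Z \<Longrightarrow> fst a \<in> dom_set (fst b) \<Longrightarrow> transvection X E a b \<in> carrier AutG"
  using transvection_eq_elem_aut[of b a] letter_elt_dom_span[of a "fst b"] Z_vertex by auto

lemma G_gens_carrier: "G_gens X E Z \<subseteq> carrier AutG"
  using inner_AutG transvection_carrier by (auto elim: G_gens_cases)

lemma G_subgroup: "subgroup GG AutG"
  unfolding G_Z_def by (rule AutG.generate_is_subgroup[OF G_gens_carrier])

lemma transvection_mem_G_gens:
  assumes "fst b \<in> Z" "fst a \<in> dom_set (fst b)"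
  shows "transvection X E a b \<in> G_gens X E Z"
proof -
  have "a \<in> letters Z" "b \<in> letters Z" "dominates X E (fst a) (fst b)" "fst a \<noteq> fst b"
    using assms by (auto simp: mem_letters_iff mem_dom_set_iff)
  then show ?thesis unfolding G_gens_def by blast
qed

lemma inv_inner: assumes "g \<in> carrier G" shows "inv\<^bsub>AutG\<^esub> (inner g) = inner (inv\<^bsub>G\<^esub> g)"
proof (rule AutG.inv_equality)
  show "inner g \<in> carrier AutG" "inner (inv\<^bsub>G\<^esub> g) \<in> carrier AutG"
    using inner_AutG assms by auto
  then show "inner (inv\<^bsub>G\<^esub> g) \<otimes>\<^bsub>AutG\<^esub> inner g = \<one>\<^bsub>AutG\<^esub>"
    using assms AutG.one_closed[unfolded one_AutG]
    by (intro AutG_eq_on_gens) (auto simp: mult_AutG_apply one_AutG inner_def RAAG.group_cancel_simps)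
qed

lemma G_gens_inv: assumes "f \<in> G_gens X E Z" shows "inv\<^bsub>AutG\<^esub> f \<in> G_gens X E Z"
  using assms
proof (cases rule: G_gens_cases)
  case (1 g)
  then show ?thesis using inv_inner by (auto simp: G_gens_def inner_auts_eq_image)
next
  case (2 a b)
  have "inv\<^bsub>AutG\<^esub> f = transvection X E (inv_letter a) b"
    using 2 transvection_eq_elem_aut[OF 2(1,2)] transvection_eq_elem_aut[of b "inv_letter a"]
      elem_aut_AutG(2)[OF Z_vertex[OF 2(1)]] letter_elt_dom_span[OF 2(2)] dom_set_vertex
    by (simp add: letter_elt_inv_letter)
  then show ?thesis using transvection_mem_G_gens[of b "inv_letter a"] 2 by simp
qed

lemma G_gens_conj_K:
  assumes f: "f \<in> G_gens X E Z" and k: "k \<in> KK"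
  shows "f \<otimes>\<^bsub>AutG\<^esub> k \<otimes>\<^bsub>AutG\<^esub> inv\<^bsub>AutG\<^esub> f \<in> KK"
  using f
proof (cases rule: G_gens_cases)
  case (1 g)
  then show ?thesis
    using inner_mem_K k subgroup.m_closed[OF K_subgroup] subgroup.m_inv_closed[OF K_subgroup]
      by simp
next
  case (2 a b)
  then have "KK \<subseteq> conj_into_K f"
    using K_subset_conj_into_K[OF transvection_carrier basic_auts_conj_into_K_transvection]
      by simp
  then show ?thesis using k by (auto simp: conj_into_K_def)
qed

lemma elem_aut_right_mem_G: "c \<in> Z \<Longrightarrow> fst l \<in> dom_set c \<Longrightarrow> elem_aut c \<one>\<^bsub>G\<^esub> (letter_elt l) \<in> GG"
  using generate.incl[OF transvection_mem_G_gens[of "(c, False)" l]]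
    transvection_eq_elem_aut[of "(c, False)" l]
  by (simp add: G_Z_def)

lemma elem_aut_left_mem_G:
  "c \<in> Z \<Longrightarrow> fst l \<in> dom_set c \<Longrightarrow> elem_aut c (inv\<^bsub>G\<^esub> (letter_elt l)) \<one>\<^bsub>G\<^esub> \<in> GG"
  using generate.incl[OF transvection_mem_G_gens[of "(c, True)" l]]
    transvection_eq_elem_aut[of "(c, True)" l]
  by (simp add: G_Z_def)

lemma elem_aut_mem_G:
  assumes c: "c \<in> Z" and pq: "p \<in> dom_span c" "q \<in> dom_span c"
  shows "elem_aut c p q \<in> GG"
proof -
  have X: "c \<in> X" using Z_vertex[OF c] .
  have one: "elem_aut c \<one>\<^bsub>G\<^esub> \<one>\<^bsub>G\<^esub> \<in> GG"
    using elem_aut_one[OF X] subgroup.one_closed[OF G_subgroup] by simp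
  have right: "elem_aut c \<one>\<^bsub>G\<^esub> q \<in> GG" if "q \<in> dom_span c" for q
    using that unfolding gen_span_def
  proof (induction rule: generate.induct)
    case (incl h)
    then show ?case using elem_aut_right_mem_G[OF c, of "(_, False)"] by auto
  next
    case (inv h)
    then show ?case using elem_aut_right_mem_G[OF c, of "(_, True)"] by auto
  next
    case (eng x y)
    then have "elem_aut c \<one>\<^bsub>G\<^esub> x \<otimes>\<^bsub>AutG\<^esub> elem_aut c \<one>\<^bsub>G\<^esub> y = elem_aut c \<one>\<^bsub>G\<^esub> (x \<otimes>\<^bsub>G\<^esub> y)"
      using elem_aut_mult[OF X] by (simp add: gen_span_def generate.one)
    then show ?case using eng subgroup.m_closed[OF G_subgroup] by metis
  qed (rule one)
  have left: "elem_aut c p \<one>\<^bsub>G\<^esub> \<in> GG" if "p \<in> dom_span c" for p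
    using that unfolding gen_span_def
  proof (induction rule: generate.induct)
    case (incl h)
    then show ?case using elem_aut_left_mem_G[OF c, of "(_, True)"] dom_set_vertex by auto
  next
    case (inv h)
    then show ?case using elem_aut_left_mem_G[OF c, of "(_, False)"] by auto
  next
    case (eng x y)
    then have "elem_aut c y \<one>\<^bsub>G\<^esub> \<otimes>\<^bsub>AutG\<^esub> elem_aut c x \<one>\<^bsub>G\<^esub> = elem_aut c (x \<otimes>\<^bsub>G\<^esub> y) \<one>\<^bsub>G\<^esub>"
      using elem_aut_mult[OF X] by (simp add: gen_span_def generate.one)
    then show ?case using eng subgroup.m_closed[OF G_subgroup] by metis
  qed (rule one)
  have "elem_aut c p \<one>\<^bsub>G\<^esub> \<otimes>\<^bsub>AutG\<^esub> elem_aut c \<one>\<^bsub>G\<^esub> q = elem_aut c p q"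
    using elem_aut_mult[OF X] pq by simp
  then show ?thesis using left[OF pq(1)] right[OF pq(2)] subgroup.m_closed[OF G_subgroup] by metis
qed

lemma K_subset_G: "KK \<subseteq> GG"
  unfolding K_Z_def
proof (rule AutG.generate_subgroup_incl[OF _ G_subgroup], rule subsetI)
  fix k assume "k \<in> K_gens X E Z"
  then show "k \<in> GG"
  proof (cases rule: K_gens_cases)
    case (1 g)
    then have "k \<in> G_gens X E Z" by (auto simp: G_gens_def inner_auts_eq_image)
    then show ?thesis unfolding G_Z_def by (rule generate.incl)
  next
    case (2 c p q)
    then show ?thesis using elem_aut_mem_G by simp
  qed
qed

end

theorem lemma3p4:
  fixes X :: "'v set" and E :: "'v \<Rightarrow> 'v \<Rightarrow> bool" and Z :: "'v set"
  assumes "finite X"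
    and "\<And>x y. E x y \<Longrightarrow> x \<in> X \<and> y \<in> X"
    and "\<And>x y. E x y \<Longrightarrow> E y x"
    and "\<And>x. \<not> E x x"
    and "Z \<subseteq> X"
  shows "K_Z X E Z \<lhd> (Aut X E)\<lparr>carrier := G_Z X E Z\<rparr>"
proof -
  interpret raag X E Z using assms by unfold_locales auto
  show ?thesis
    unfolding G_Z_def
  proof (rule AutG.normal_generate_if_normalized[OF K_subgroup G_gens_carrier])
    show "KK \<subseteq> generate AutG (G_gens X E Z)" using K_subset_G by (simp add: G_Z_def)
    show "f \<otimes>\<^bsub>AutG\<^esub> k \<otimes>\<^bsub>AutG\<^esub> inv\<^bsub>AutG\<^esub> f \<in> KK" if "f \<in> G_gens X E Z" "k \<in> KK" for f k
      using G_gens_conj_K that .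
    show "inv\<^bsub>AutG\<^esub> f \<otimes>\<^bsub>AutG\<^esub> k \<otimes>\<^bsub>AutG\<^esub> f \<in> KK" if "f \<in> G_gens X E Z" "k \<in> KK" for f k
      using G_gens_conj_K[OF G_gens_inv[OF that(1)] that(2)] G_gens_carrier that(1) by auto
  qed
qed

end
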